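(* Let $\sigma:[0,\infty)\to[0,\infty)$ be nondecreasing with $\lim_{t\to\infty}\sigma(t)=\infty$, let $\alpha>0$, and take $a\ge 0$ such that $\sigma(x)>0$ for $x\ge a$. Then the following are equivalent: (i) there exists $C>0$ such that $\int_1^{\infty}\frac{\sigma(yt)}{t^{1+\alpha}}\,dt\le C\sigma(y)+C$ for all $y>0$; (ii) there exists a nondecreasing function $\kappa:[0,\infty)\to[0,\infty)$ such that $\sigma\sim\kappa$, $\kappa(0)=\sigma(0)/\alpha^2$, $\kappa$ satisfies (i) (i.e. there is $C'>0$ with $\int_1^{\infty}\frac{\kappa(yt)}{t^{1+\alpha}}\,dt\le C'\kappa(y)+C'$ for all $y>0$), and $t\mapsto\kappa(t^{1/\alpha})$ is concave; (iii) $\lim_{\varepsilon\to 0}\limsup_{t\to+\infty}\frac{\varepsilon^{\alpha}\sigma(t)}{\sigma(\varepsilon t)}=0$; (iv) there exists $K>1$ such that $\limsup_{t\to+\infty}\frac{\sigma(Kt)}{\sigma(t)}<K^{\alpha}$; (v) $\gamma(\sigma)>1/\alpha$; (vi) $\alpha(\sigma)<\alpha$; (vii) there exists $\gamma\in(0,\alpha)$ such that $t\mapsto\sigma(t)/t^{\gamma}$ is almost decreasing in $[a,\infty)$ if $a>0$, and in $[\varepsilon,\infty)$ for every $\varepsilon>0$ if $a=0$; (viii) there exists $C>0$ such that $\int_a^{y}\frac{t^{\alpha}}{\sigma(t)}\frac{dt}{t}\le \frac{Cy^{\alpha}}{\sigma(y)}$ for all $y\ge a$; (ix) there exists $C>0$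 such that $\sum_{k=\lceil a\rceil+1}^{p}\frac{k^{\alpha-1}}{\sigma(k)}\le C\frac{p^{\alpha}}{\sigma(p)}$ for all $p\in\mathbb{N}$ with $p\ge\lceil a\rceil+1$; (x) for every $\theta\in(0,1)$ there exists $k\in\mathbb{N}$, $k\ge 2$, such that $\sigma(kp)\le\theta k^{\alpha}\sigma(p)$ for every $p\in\mathbb{N}$ with $p\ge\lceil a\rceil+1$; (xi) there exists $k\in\mathbb{N}$, $k\ge 2$, such that $\limsup_{p\in\mathbb{N},\,p\to\infty}\frac{\sigma(kp)}{\sigma(p)}<k^{\alpha}$; (xii) there exists $C>0$ such that $\sum_{k=p}^{\infty}\frac{\sigma(k)}{k^{1+\alpha}}\le C\frac{\sigma(p)}{p^{\alpha}}$ for every $p\in\mathbb{N}$ with $p\ge\lceil a\rceil$.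
   Context: $\mathbb{N}=\{1,2,\dots\}$, $\lceil x\rceil=\min\{k\in\mathbb{Z}:x\le k\}$. For functions $\sigma,\tau:I\to[0,\infty)$ on an unbounded interval $I\subseteq[0,\infty)$, $\sigma\sim\tau$ means there is $C\ge1$ with $C^{-1}\tau(t)-C\le\sigma(t)\le C\tau(t)+C$ for all $t\in I$. A function $h$ on $[a,\infty)$ is almost decreasing if there is $m>0$ with $m\,h(y)\le h(x)$ for all $a\le x\le y$. For a measurable positive function $f$ on some $[A,\infty)$, its upper Matuszewska index is $\alpha(f):=\inf\{\alpha\in\mathbb{R}:\exists C_\alpha>0\ \forall\Lambda>1,\ \limsup_{x\to\infty}\sup_{\lambda\in[1,\Lambda]}\frac{f(\lambda x)}{\lambda^{\alpha}f(x)}\le C_\alpha\}$ (with $\inf\emptyset=\infty$); for $\sigma$ as in the claim, $\alpha(\sigma)$ means the index of the restriction of $\sigma$ to any $[A,\infty)$ with $A>0$ on which $\sigma>0$ (this does not depend on $A$). For $\gamma>0$, say $(P_{\sigma,\gamma})$ holds if there is $K>1$ with $\limsup_{t\to\infty}\sigma(K^{\gamma}t)/\sigma(t)<K$; $\gamma(\sigma):=\sup\{\gamma>0:(P_{\sigma,\gamma})\text{ holds}\}$, and $\gamma(\sigma):=0$ if no $(P_{\sigma,\gamma})$ holds. *)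

theory Defs
  imports "HOL-Analysis.Analysis"
begin

definition sim_on :: "real set \<Rightarrow> (real \<Rightarrow> real) \<Rightarrow> (real \<Rightarrow> real) \<Rightarrow> bool" where
  "sim_on I \<sigma> \<tau> \<longleftrightarrow>
     (\<exists>C\<ge>1. \<forall>t\<in>I. \<tau> t / C - C \<le> \<sigma> t \<and> \<sigma> t \<le> C * \<tau> t + C)"

definition almost_decreasing_from :: "real \<Rightarrow> (real \<Rightarrow> real) \<Rightarrow> bool" where
  "almost_decreasing_from a h \<longleftrightarrow>
     (\<exists>m>0. \<forall>x y. a \<le> x \<longrightarrow> x \<le> y \<longrightarrow> m * h y \<le> h x)"

text \<open>Upper Matuszewska index (only the behaviour as x tends to infinity matters,
  so the restriction to some [A, infinity) is implicit).\<close>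
definition upper_matuszewska :: "(real \<Rightarrow> real) \<Rightarrow> ereal" where
  "upper_matuszewska f = Inf (ereal ` {\<alpha>. \<exists>C\<alpha>>0. \<forall>\<Lambda>>1.
      Limsup at_top (\<lambda>x. SUP l\<in>{1..\<Lambda>}. ereal (f (l * x) / (l powr \<alpha> * f x)))
        \<le> ereal C\<alpha>})"

definition P_prop :: "(real \<Rightarrow> real) \<Rightarrow> real \<Rightarrow> bool" where
  "P_prop \<sigma> \<gamma> \<longleftrightarrow>
     (\<exists>K>1. Limsup at_top (\<lambda>t. ereal (\<sigma> (K powr \<gamma> * t) / \<sigma> t)) < ereal K)"

definition gamma_index :: "(real \<Rightarrow> real) \<Rightarrow> ereal" where
  "gamma_index \<sigma> =
     (if {\<gamma>. \<gamma> > 0 \<and> P_prop \<sigma> \<gamma>} = {} then 0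
      else Sup (ereal ` {\<gamma>. \<gamma> > 0 \<and> P_prop \<sigma> \<gamma>}))"

definition integral_condition :: "(real \<Rightarrow> real) \<Rightarrow> real \<Rightarrow> bool" where
  "integral_condition \<sigma> \<alpha> \<longleftrightarrow>
     (\<exists>C>0. \<forall>y>0. (\<integral>\<^sup>+ t\<in>{1..}. ennreal (\<sigma> (y * t) / t powr (1 + \<alpha>)) \<partial>lborel)
                    \<le> ennreal (C * \<sigma> y + C))"

end

theory Submission
  imports Defs
begin

text \<open>
  Every condition is shown equivalent to an upper type \<open>\<gamma> < \<alpha>\<close>:
  \<open>\<sigma>(l x) \<le> M l\<^sup>\<gamma> \<sigma>(x)\<close> for \<open>x \<ge> a\<close>, \<open>l \<ge> 1\<close>.
  A single dilation bound \<open>\<sigma>(K t) \<le> \<rho> \<sigma>(t)\<close> with \<open>\<rho> < K\<^sup>\<alpha>\<close> iterates along the powers of \<open>K\<close>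
  to such a bound with \<open>\<gamma> = log\<^sub>K \<rho>\<close>, monotonicity filling the gaps; conversely an upper
  type below \<open>\<alpha>\<close> bounds every integral and series of the statement by comparison with
  \<open>t\<^sup>\<gamma>\<^sup>-\<^sup>\<alpha>\<^sup>-\<^sup>1\<close>.
  For the converse implications, the integral or series in question is comparable with
  \<open>\<sigma>(y) / y\<^sup>\<alpha>\<close> (tails) or with its reciprocal (initial segments), and the dyadic block
  \<open>[y, 2y]\<close> alone carries a fixed fraction of it. Hence it contracts geometrically under
  doubling, which gives a dilation bound with \<open>K = 2\<^sup>n\<close>.
  The regularization of (ii) is \<open>\<kappa>(y) = y\<^sup>\<alpha> / \<alpha> \<integral>\<^sub>y\<^sup>\<infinity> \<sigma>(s) s\<^sup>-\<^sup>1\<^sup>-\<^sup>\<alpha> ds\<close>; after the substitution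
  \<open>u = y\<^sup>\<alpha>\<close> the monotonicity of \<open>\<sigma>\<close> yields a supporting line of \<open>u \<mapsto> \<kappa>(u\<^sup>1\<^sup>/\<^sup>\<alpha>)\<close> at every
  point, hence concavity.
\<close>

lemma exists_nat_powr_gap:
  fixes \<gamma> \<beta> M :: real
  assumes "0 < \<gamma>" "\<gamma> < \<beta>" "M > 0"
  shows "\<exists>n::nat. n \<ge> 2 \<and> M * real n powr \<gamma> < real n powr \<beta>"
proof -
  define n where "n = nat \<lceil>max 2 ((2*M) powr (1/(\<beta>-\<gamma>)))\<rceil>"
  have n2: "real n \<ge> 2" and big: "(2*M) powr (1/(\<beta>-\<gamma>)) \<le> real n"
    unfolding n_def by linarith+
  have "2*M = ((2*M) powr (1/(\<beta>-\<gamma>))) powr (\<beta>-\<gamma>)"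
    using assms by (simp add: powr_powr)
  also have "\<dots> \<le> real n powr (\<beta>-\<gamma>)"
    using big assms by (intro powr_mono2) auto
  finally have "2*M \<le> real n powr (\<beta>-\<gamma>)" .
  moreover have "real n powr \<gamma> > 0" using n2 by simp
  ultimately have "M * real n powr \<gamma> < real n powr \<gamma> * real n powr (\<beta>-\<gamma>)"
    using assms by (simp add: mult.commute)
  also have "\<dots> = real n powr \<beta>" by (simp add: powr_add[symmetric])
  finally show ?thesis using n2 by (intro exI[of _ n]) auto
qed

lemma exists_power_between:
  fixes K l :: real
  assumes "K > 1" "l \<ge> 1"
  shows "\<exists>n::nat. l \<le> K^n \<and> K^n \<le> K * l"
proof -
  define n where "n = nat \<lceil>log K l\<rceil>"
  have "log K l \<ge> 0" using assms by simp
  hence "log K l \<le> real n" "real n \<le> log K l + 1" unfolding n_def by linarith+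
  hence "K powr (log K l) \<le> K powr real n" "K powr real n \<le> K powr (log K l + 1)"
    using assms by (intro powr_mono; simp)+
  moreover have "K powr (log K l) = l" "K powr (log K l + 1) = K * l" "K powr real n = K^n"
    using assms by (simp_all add: powr_add powr_realpow)
  ultimately show ?thesis by (intro exI[of _ n]) auto
qed

lemma obtain_exponent_below:
  fixes K \<alpha> \<rho> :: real
  assumes "K > 1" "\<alpha> > 0" "\<rho> < K powr \<alpha>"
  obtains \<gamma> where "0 < \<gamma>" "\<gamma> < \<alpha>" "\<rho> \<le> K powr \<gamma>"
proof -
  define \<rho>' where "\<rho>' = max \<rho> ((1 + K powr \<alpha>) / 2)"
  have "1 < (1 + K powr \<alpha>) / 2" "(1 + K powr \<alpha>) / 2 < K powr \<alpha>"
    using assms by simp_all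
  hence \<rho>': "\<rho> \<le> \<rho>'" "1 < \<rho>'" "\<rho>' < K powr \<alpha>"
    unfolding \<rho>'_def using assms by (auto simp: less_max_iff_disj)
  have "log K \<rho>' < log K (K powr \<alpha>)" using \<rho>' assms by (intro log_less) auto
  also have "\<dots> = \<alpha>" using assms by simp
  finally have "log K \<rho>' < \<alpha>" .
  moreover have "0 < log K \<rho>'" using \<rho>' assms by simp
  moreover have "K powr (log K \<rho>') = \<rho>'" using \<rho>' assms by simp
  ultimately show ?thesis using that[of "log K \<rho>'"] \<rho>' assms by simp
qed

lemma powr_minus_one_minus: "t > 0 \<Longrightarrow> (t::real) powr (-1 - \<beta>) = 1 / t powr (1 + \<beta>)"
  using powr_minus_divide[of t "1 + \<beta>"] by (simp add: minus_add_distrib)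

lemma powr_increment_mvt:
  fixes x e :: real
  assumes "x > 0"
  obtains z where "x < z" "z < x + 1" "(x + 1) powr e - x powr e = e * z powr (e - 1)"
proof -
  have "\<exists>z. x < z \<and> z < x + 1 \<and> (x + 1) powr e - x powr e = ((x + 1) - x) * (e * z powr (e - 1))"
    by (rule MVT2) (use assms in \<open>auto intro!: derivative_eq_intros\<close>)
  thus ?thesis using that by auto
qed

lemma powr_increment_lower:
  fixes x \<beta> :: real
  assumes "x > 0" "0 < \<beta>" "\<beta> \<le> 1"
  shows "\<beta> * (x + 1) powr (\<beta> - 1) \<le> (x + 1) powr \<beta> - x powr \<beta>"
proof -
  obtain z where z: "x < z" "z < x + 1" "(x + 1) powr \<beta> - x powr \<beta> = \<beta> * z powr (\<beta> - 1)"
    using powr_increment_mvt[OF assms(1)] .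
  have "(x + 1) powr (\<beta> - 1) \<le> z powr (\<beta> - 1)" using z assms by (intro powr_mono2') auto
  thus ?thesis using z(3) assms by (simp add: mult_left_mono)
qed

lemma powr_decrement_lower:
  fixes x \<beta> :: real
  assumes "x > 0" "\<beta> > 0"
  shows "\<beta> * (x + 1) powr (-1 - \<beta>) \<le> x powr (-\<beta>) - (x + 1) powr (-\<beta>)"
proof -
  obtain z where z: "x < z" "z < x + 1" "(x + 1) powr (-\<beta>) - x powr (-\<beta>) = -\<beta> * z powr (-\<beta> - 1)"
    using powr_increment_mvt[OF assms(1)] .
  have "-\<beta> - 1 = -1 - \<beta>" by simp
  with z(3) have z3: "(x + 1) powr (-\<beta>) - x powr (-\<beta>) = -\<beta> * z powr (-1 - \<beta>)" by simp
  have "\<beta> * (x + 1) powr (-1 - \<beta>) \<le> \<beta> * z powr (-1 - \<beta>)"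
    using z assms by (intro mult_left_mono powr_mono2') auto
  thus ?thesis using z3 by simp
qed

lemma sum_powr_le:
  fixes \<beta> :: real
  assumes \<beta>: "0 < \<beta>" "\<beta> \<le> 1" and p: "p \<ge> 1"
  shows "(\<Sum>k=1..p. real k powr (\<beta> - 1)) \<le> real p powr \<beta> / \<beta>"
  using p
proof (induction p rule: dec_induct)
  case base
  show ?case using \<beta> by simp
next
  case (step n)
  have "(\<Sum>k=1..Suc n. real k powr (\<beta> - 1)) \<le> real n powr \<beta> / \<beta> + (real n + 1) powr (\<beta> - 1)"
    using step by (simp add: add.commute)
  also have "(real n + 1) powr (\<beta> - 1) \<le> ((real n + 1) powr \<beta> - real n powr \<beta>) / \<beta>"
    using powr_increment_lower[of "real n" \<beta>] step \<beta> by (simp add: field_simps)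
  finally show ?case by (simp add: diff_divide_distrib add.commute)
qed

lemma suminf_powr_tail_le:
  fixes \<beta> :: real and p :: nat
  assumes \<beta>: "\<beta> > 0" and p: "p \<ge> 1"
  shows "(\<Sum>j. ennreal (real (p + j) powr (-1 - \<beta>))) \<le> ennreal ((1 + 1 / \<beta>) * real p powr (-\<beta>))"
proof (rule suminf_le_const)
  text \<open>Telescoping: each term is dominated by the decrement of \<open>x\<^sup>-\<^sup>\<beta> / \<beta>\<close>.\<close>
  have telescope: "(\<Sum>j<Suc N. real (p + j) powr (-1 - \<beta>)) + real (p + N) powr (-\<beta>) / \<beta>
      \<le> real p powr (-1 - \<beta>) + real p powr (-\<beta>) / \<beta>" for N
  proof (induction N)
    case (Suc N)
    have "\<beta> * (real (p + N) + 1) powr (-1 - \<beta>) \<le> real (p + N) powr (-\<beta>) - (real (p + N) + 1) powr (-\<beta>)"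
      using powr_decrement_lower[of "real (p + N)" \<beta>] p \<beta> by simp
    hence "(real (p + N) + 1) powr (-1 - \<beta>) \<le> (real (p + N) powr (-\<beta>) - (real (p + N) + 1) powr (-\<beta>)) / \<beta>"
      using \<beta> by (simp add: field_simps)
    hence step: "(real (p + N) + 1) powr (-1 - \<beta>) + (real (p + N) + 1) powr (-\<beta>) / \<beta>
        \<le> real (p + N) powr (-\<beta>) / \<beta>" by (simp add: diff_divide_distrib)
    have "real (p + Suc N) = real (p + N) + 1" by simp
    hence "(\<Sum>j<Suc (Suc N). real (p + j) powr (-1 - \<beta>)) + real (p + Suc N) powr (-\<beta>) / \<beta>
       = (\<Sum>j<Suc N. real (p + j) powr (-1 - \<beta>))
         + ((real (p + N) + 1) powr (-1 - \<beta>) + (real (p + N) + 1) powr (-\<beta>) / \<beta>)"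
      by (simp only: sum.lessThan_Suc add.assoc)
    thus ?case using Suc step by linarith
  qed simp
  fix N
  have "(\<Sum>j<N. real (p + j) powr (-1 - \<beta>)) \<le> (\<Sum>j<Suc N. real (p + j) powr (-1 - \<beta>))" by simp
  also have "\<dots> \<le> real p powr (-1 - \<beta>) + real p powr (-\<beta>) / \<beta>"
    using telescope[of N] divide_nonneg_pos[OF powr_ge_zero \<beta>, of "real (p + N)" "-\<beta>"] by linarith
  also have "\<dots> \<le> (1 + 1 / \<beta>) * real p powr (-\<beta>)"
    using p by (simp add: algebra_simps powr_mono)
  finally show "(\<Sum>j<N. ennreal (real (p + j) powr (-1 - \<beta>))) \<le> ennreal ((1 + 1 / \<beta>) * real p powr (-\<beta>))"
    by (simp add: ennreal_leI)
qed simp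

lemma Limsup_ratio_less_iff:
  fixes f g :: "'a \<Rightarrow> real"
  assumes pos: "eventually (\<lambda>x. g x > 0) F"
  shows "Limsup F (\<lambda>x. ereal (f x / g x)) < ereal c \<longleftrightarrow> (\<exists>\<rho><c. eventually (\<lambda>x. f x \<le> \<rho> * g x) F)"
proof
  assume "Limsup F (\<lambda>x. ereal (f x / g x)) < ereal c"
  then obtain \<rho> where \<rho>: "Limsup F (\<lambda>x. ereal (f x / g x)) < ereal \<rho>" "\<rho> < c"
    using ereal_dense2 by (metis ereal_less(2) less_ereal.simps(1))
  have "eventually (\<lambda>x. ereal (f x / g x) < ereal \<rho>) F" using Limsup_lessD[OF \<rho>(1)] .
  hence "eventually (\<lambda>x. f x \<le> \<rho> * g x) F"
    using pos by eventually_elim (auto simp: divide_less_eq)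
  thus "\<exists>\<rho><c. eventually (\<lambda>x. f x \<le> \<rho> * g x) F" using \<rho>(2) by blast
next
  assume "\<exists>\<rho><c. eventually (\<lambda>x. f x \<le> \<rho> * g x) F"
  then obtain \<rho> where \<rho>: "\<rho> < c" "eventually (\<lambda>x. f x \<le> \<rho> * g x) F" by blast
  have "eventually (\<lambda>x. ereal (f x / g x) \<le> ereal \<rho>) F"
    using \<rho>(2) pos by eventually_elim (auto simp: divide_le_eq)
  hence "Limsup F (\<lambda>x. ereal (f x / g x)) \<le> ereal \<rho>" by (rule Limsup_bounded)
  also have "\<dots> < ereal c" using \<rho>(1) by simp
  finally show "Limsup F (\<lambda>x. ereal (f x / g x)) < ereal c" .
qed

lemma gamma_index_greater_iff:
  assumes "c > 0"
  shows "gamma_index \<sigma> > ereal c \<longleftrightarrow> (\<exists>\<gamma>>c. P_prop \<sigma> \<gamma>)"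
proof (cases "{\<gamma>. \<gamma> > 0 \<and> P_prop \<sigma> \<gamma>} = {}")
  case True
  hence "gamma_index \<sigma> = 0" unfolding gamma_index_def by simp
  moreover have "\<not> (\<exists>\<gamma>>c. P_prop \<sigma> \<gamma>)" using True assms by auto
  ultimately show ?thesis using assms by (simp add: zero_ereal_def)
next
  case False
  hence "gamma_index \<sigma> = Sup (ereal ` {\<gamma>. \<gamma> > 0 \<and> P_prop \<sigma> \<gamma>})"
    unfolding gamma_index_def by (rule if_not_P)
  hence "gamma_index \<sigma> > ereal c \<longleftrightarrow> (\<exists>\<gamma>\<in>{\<gamma>. \<gamma> > 0 \<and> P_prop \<sigma> \<gamma>}. ereal c < ereal \<gamma>)"
    by (simp only: less_SUP_iff)
  thus ?thesis using assms by (auto dest: order.strict_trans)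
qed

section \<open>Geometric contraction under doubling\<close>

lemma iterate_mult_le:
  fixes K :: "'a::monoid_mult" and f :: "'a \<Rightarrow> real"
  assumes closed: "\<And>x. x \<in> S \<Longrightarrow> K * x \<in> S"
    and step: "\<And>x. x \<in> S \<Longrightarrow> f (K * x) \<le> \<rho> * f x"
    and "\<rho> \<ge> 0" "x \<in> S"
  shows "K ^ n * x \<in> S \<and> f (K ^ n * x) \<le> \<rho> ^ n * f x"
  using \<open>x \<in> S\<close>
proof (induction n arbitrary: x)
  case (Suc n)
  note IH = Suc.IH[OF closed[OF Suc.prems]]
  have eq: "K ^ Suc n * x = K ^ n * (K * x)" by (simp only: power_Suc2 mult.assoc)
  have "f (K ^ n * (K * x)) \<le> \<rho> ^ n * f (K * x)" using IH by blast
  also have "\<dots> \<le> \<rho> ^ n * (\<rho> * f x)"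
    using step[OF Suc.prems] \<open>\<rho> \<ge> 0\<close> by (intro mult_left_mono) auto
  also have "\<dots> = \<rho> ^ Suc n * f x" by (simp add: ac_simps)
  finally show ?case using IH unfolding eq by blast
qed simp

lemma doubling_contraction_iterate:
  fixes \<phi> \<psi> :: "'a::semiring_1 \<Rightarrow> real"
  assumes closed: "\<And>x. x \<in> S \<Longrightarrow> 2 * x \<in> S"
    and \<psi>_le: "\<And>x. x \<in> S \<Longrightarrow> \<psi> x \<le> B * \<phi> x"
    and \<phi>_le: "\<And>x. x \<in> S \<Longrightarrow> \<phi> x \<le> B * \<psi> x"
    and contraction: "\<And>x. x \<in> S \<Longrightarrow> \<phi> (2 * x) \<le> q * \<phi> x"
    and B: "B > 0" and q: "0 \<le> q" "q < 1"
  shows "\<exists>n>0. \<exists>\<theta><1. \<forall>x\<in>S. \<psi> (2 ^ n * x) \<le> \<theta> * \<psi> x"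
proof -
  obtain n0 where n0: "q ^ n0 < 1 / (B * B)"
    using real_arch_pow_inv[of "1 / (B * B)" q] B q by auto
  define n where "n = Suc n0"
  have "q ^ n \<le> q ^ n0" unfolding n_def using q by (intro power_decreasing) auto
  hence "B * B * q ^ n \<le> B * B * q ^ n0" using B by (intro mult_left_mono) auto
  moreover have "B * B * q ^ n0 < 1" using n0 B by (simp add: field_simps)
  ultimately have \<theta>: "B * B * q ^ n < 1" by linarith
  have "\<psi> (2 ^ n * x) \<le> B * B * q ^ n * \<psi> x" if x: "x \<in> S" for x
  proof -
    note it = iterate_mult_le[of S 2 \<phi> q, OF closed contraction q(1) x]
    have "\<psi> (2 ^ n * x) \<le> B * \<phi> (2 ^ n * x)" using \<psi>_le it by blast
    also have "\<dots> \<le> B * (q ^ n * \<phi> x)" using it B by (intro mult_left_mono) auto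
    also have "\<dots> \<le> B * (q ^ n * (B * \<psi> x))"
      using \<phi>_le[OF x] B q by (intro mult_left_mono) auto
    finally show ?thesis by (simp add: algebra_simps)
  qed
  thus ?thesis using \<theta> unfolding n_def by blast
qed

lemma tail_doubling_contraction:
  fixes \<phi> \<psi> :: "'a::semiring_1 \<Rightarrow> real"
  assumes closed: "\<And>x. x \<in> S \<Longrightarrow> 2 * x \<in> S"
    and \<psi>_le: "\<And>x. x \<in> S \<Longrightarrow> \<psi> x \<le> B * \<phi> x"
    and \<phi>_le: "\<And>x. x \<in> S \<Longrightarrow> \<phi> x \<le> B * \<psi> x"
    and \<phi>_nonneg: "\<And>x. x \<in> S \<Longrightarrow> 0 \<le> \<phi> x"
    and decrement: "\<And>x. x \<in> S \<Longrightarrow> \<phi> (2 * x) + c * \<psi> x \<le> \<phi> x"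
    and B: "B > 0" and c: "c > 0"
  shows "\<exists>n>0. \<exists>\<theta><1. \<forall>x\<in>S. \<psi> (2 ^ n * x) \<le> \<theta> * \<psi> x"
proof (rule doubling_contraction_iterate[OF closed \<psi>_le \<phi>_le _ B])
  fix x assume x: "x \<in> S"
  have "c / B * \<phi> x \<le> c / B * (B * \<psi> x)" using \<phi>_le[OF x] B c by (intro mult_left_mono) auto
  hence "\<phi> (2 * x) \<le> (1 - c / B) * \<phi> x" using decrement[OF x] B by (simp add: algebra_simps)
  also have "\<dots> \<le> max 0 (1 - c / B) * \<phi> x" using \<phi>_nonneg[OF x] by (intro mult_right_mono) auto
  finally show "\<phi> (2 * x) \<le> max 0 (1 - c / B) * \<phi> x" .
qed (use B c in auto)

lemma head_doubling_growth:
  fixes F G :: "'a::semiring_1 \<Rightarrow> real"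
  assumes closed: "\<And>x. x \<in> S \<Longrightarrow> 2 * x \<in> S"
    and G_pos: "\<And>x. x \<in> S \<Longrightarrow> G x > 0"
    and lower: "\<And>x. x \<in> S \<Longrightarrow> c * G x \<le> F x"
    and upper: "\<And>x. x \<in> S \<Longrightarrow> F x \<le> C * G x"
    and increment: "\<And>x. x \<in> S \<Longrightarrow> F x + c * G (2 * x) \<le> F (2 * x)"
    and c: "c > 0" and C: "C > 0"
  shows "\<exists>n>0. \<exists>\<theta><1. \<forall>x\<in>S. 1 / G (2 ^ n * x) \<le> \<theta> * (1 / G x)"
proof (rule doubling_contraction_iterate[of S "\<lambda>x. 1 / G x" "max C (1 / c)" "\<lambda>x. 1 / F x"])
  fix x assume x: "x \<in> S"
  have F_pos: "F x > 0" using lower[OF x] mult_pos_pos[OF c G_pos[OF x]] by linarith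
  have "1 / G x \<le> C * (1 / F x)" using upper[OF x] F_pos G_pos[OF x] by (simp add: field_simps)
  also have "\<dots> \<le> max C (1 / c) * (1 / F x)" using F_pos by (intro mult_right_mono) auto
  finally show "1 / G x \<le> max C (1 / c) * (1 / F x)" .
  have "1 / F x \<le> 1 / c * (1 / G x)" using lower[OF x] F_pos G_pos[OF x] c by (simp add: field_simps)
  also have "\<dots> \<le> max C (1 / c) * (1 / G x)" using G_pos[OF x] by (intro mult_right_mono) auto
  finally show "1 / F x \<le> max C (1 / c) * (1 / G x)" .
  have F2_pos: "F (2 * x) > 0" using lower[OF closed[OF x]] mult_pos_pos[OF c G_pos[OF closed[OF x]]] by linarith
  have "c / C * F (2 * x) \<le> c * G (2 * x)" using upper[OF closed[OF x]] c C by (simp add: field_simps)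
  hence "F x \<le> (1 - c / C) * F (2 * x)" using increment[OF x] by (simp add: algebra_simps)
  also have "\<dots> \<le> max 0 (1 - c / C) * F (2 * x)" using F2_pos by (intro mult_right_mono) auto
  finally have "F x / (F x * F (2 * x)) \<le> max 0 (1 - c / C) * F (2 * x) / (F x * F (2 * x))"
    using F_pos F2_pos by (intro divide_right_mono) auto
  thus "1 / F (2 * x) \<le> max 0 (1 - c / C) * (1 / F x)" using F_pos F2_pos by simp
qed (use closed c C in auto)

lemma borel_measurable_mono_on_ext:
  fixes g :: "real \<Rightarrow> real"
  assumes "mono_on {0..} g"
  shows "(\<lambda>x. g (max 0 x)) \<in> borel_measurable borel"
  by (rule borel_measurable_mono) (auto simp: mono_def intro!: mono_onD[OF assms])

lemma nn_integral_powr_tail: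
  fixes \<beta> z :: real
  assumes \<beta>: "\<beta> > 0" and z: "z > 0"
  shows "(\<integral>\<^sup>+ t. ennreal (t powr (-1 - \<beta>)) * indicator {z..} t \<partial>lborel) = ennreal (z powr (-\<beta>) / \<beta>)"
proof -
  have "(\<integral>\<^sup>+ t. ennreal (t powr (-1 - \<beta>)) * indicator {z..} t \<partial>lborel)
      = ennreal (0 - (- (z powr (-\<beta>)) / \<beta>))"
  proof (rule nn_integral_FTC_atLeast)
    fix x assume "z \<le> x"
    hence "x > 0" using z by simp
    thus "((\<lambda>x. - (x powr (-\<beta>)) / \<beta>) has_real_derivative x powr (-1 - \<beta>)) (at x)"
      using \<beta> by (auto intro!: derivative_eq_intros simp: field_simps powr_diff powr_minus)
  next
    have "((\<lambda>x::real. x powr (-\<beta>)) \<longlongrightarrow> 0) at_top"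
      using \<beta> by (intro tendsto_neg_powr filterlim_ident) auto
    hence "((\<lambda>x::real. x powr (-\<beta>) / \<beta>) \<longlongrightarrow> 0) at_top" by (rule tendsto_divide_zero)
    thus "((\<lambda>x::real. - (x powr (-\<beta>)) / \<beta>) \<longlongrightarrow> 0) at_top" using tendsto_minus by fastforce
  qed auto
  thus ?thesis by simp
qed

lemma nn_integral_powr_from_0:
  fixes \<beta> y :: real
  assumes \<beta>: "\<beta> > 0" and y: "y \<ge> 0"
  shows "(\<integral>\<^sup>+ t. ennreal (t powr (\<beta> - 1)) * indicator {0..y} t \<partial>lborel) = ennreal (y powr \<beta> / \<beta>)"
proof -
  have "((\<lambda>x. x powr (\<beta> - 1)) has_integral (y powr (\<beta> - 1 + 1) / (\<beta> - 1 + 1))) {0..y}"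
    by (rule has_integral_powr_from_0) (use \<beta> y in auto)
  hence "integral\<^sup>N lborel (\<lambda>x. indicator {0..y} x * x powr (\<beta> - 1)) = y powr \<beta> / \<beta>"
    by (subst nn_integral_has_integral_lebesgue) auto
  moreover have "(\<integral>\<^sup>+ t. ennreal (t powr (\<beta> - 1)) * indicator {0..y} t \<partial>lborel)
      = integral\<^sup>N lborel (\<lambda>x. indicator {0..y} x * x powr (\<beta> - 1))"
    by (intro nn_integral_cong) (auto simp: indicator_def)
  ultimately show ?thesis by simp
qed

lemma nn_integral_split_at:
  fixes h :: "real \<Rightarrow> ennreal"
  assumes [measurable]: "h \<in> borel_measurable borel" and "y \<le> x"
  shows "(\<integral>\<^sup>+ s. h s * indicator {y..} s \<partial>lborel) =
    (\<integral>\<^sup>+ s. h s * indicator {y..<x} s \<partial>lborel) + (\<integral>\<^sup>+ s. h s * indicator {x..} s \<partial>lborel)"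
proof -
  have "(\<integral>\<^sup>+ s. h s * indicator {y..} s \<partial>lborel)
      = (\<integral>\<^sup>+ s. h s * indicator {y..<x} s + h s * indicator {x..} s \<partial>lborel)"
    using \<open>y \<le> x\<close> by (intro nn_integral_cong) (auto simp: indicator_def)
  also have "\<dots> = (\<integral>\<^sup>+ s. h s * indicator {y..<x} s \<partial>lborel) + (\<integral>\<^sup>+ s. h s * indicator {x..} s \<partial>lborel)"
    by (rule nn_integral_add) measurable
  finally show ?thesis .
qed

lemma sim_on_sym:
  assumes "sim_on I \<sigma> \<tau>" "\<forall>t\<in>I. \<sigma> t \<ge> 0"
  shows "sim_on I \<tau> \<sigma>"
proof -
  obtain C where C: "C \<ge> 1" and b: "\<And>t. t \<in> I \<Longrightarrow> \<tau> t / C - C \<le> \<sigma> t \<and> \<sigma> t \<le> C * \<tau> t + C"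
    using assms(1) unfolding sim_on_def by blast
  have "\<sigma> t / C\<^sup>2 - C\<^sup>2 \<le> \<tau> t \<and> \<tau> t \<le> C\<^sup>2 * \<sigma> t + C\<^sup>2" if t: "t \<in> I" for t
  proof
    have "\<sigma> t / C\<^sup>2 \<le> \<sigma> t / C" "C \<le> C\<^sup>2"
      using C assms(2) t by (auto simp: power2_eq_square intro!: divide_left_mono)
    moreover have "\<sigma> t / C - 1 \<le> \<tau> t" using b[OF t] C by (simp add: field_simps)
    ultimately show "\<sigma> t / C\<^sup>2 - C\<^sup>2 \<le> \<tau> t" using C by linarith
    have "C * \<sigma> t \<le> C\<^sup>2 * \<sigma> t" using C assms(2) t by (intro mult_right_mono) (auto simp: power2_eq_square)
    moreover have "\<tau> t \<le> C * \<sigma> t + C\<^sup>2" using b[OF t] C by (simp add: field_simps power2_eq_square)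
    ultimately show "\<tau> t \<le> C\<^sup>2 * \<sigma> t + C\<^sup>2" by linarith
  qed
  moreover have "C\<^sup>2 \<ge> 1" using C by (simp add: one_le_power)
  ultimately show ?thesis unfolding sim_on_def by blast
qed

lemma dilation_integral_le_of_bound:
  fixes \<sigma> \<kappa> :: "real \<Rightarrow> real"
  assumes \<kappa>_mono: "mono_on {0..} \<kappa>" and \<kappa>_nonneg: "\<forall>t\<ge>0. \<kappa> t \<ge> 0"
    and bound: "\<And>t. t \<ge> 0 \<Longrightarrow> \<sigma> t \<le> C * \<kappa> t + C"
    and C: "C \<ge> 0" and \<alpha>: "\<alpha> > 0" and y: "y > 0"
  shows "(\<integral>\<^sup>+ t\<in>{1..}. ennreal (\<sigma> (y * t) / t powr (1 + \<alpha>)) \<partial>lborel)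
    \<le> ennreal C * (\<integral>\<^sup>+ t\<in>{1..}. ennreal (\<kappa> (y * t) / t powr (1 + \<alpha>)) \<partial>lborel) + ennreal (C / \<alpha>)"
proof -
  define \<kappa>0 where "\<kappa>0 = (\<lambda>x. \<kappa> (max 0 x))"
  have [measurable]: "\<kappa>0 \<in> borel_measurable borel"
    unfolding \<kappa>0_def by (rule borel_measurable_mono_on_ext[OF \<kappa>_mono])
  have "(\<integral>\<^sup>+ t\<in>{1..}. ennreal (\<sigma> (y * t) / t powr (1 + \<alpha>)) \<partial>lborel)
     \<le> (\<integral>\<^sup>+ t. ennreal C * (ennreal (\<kappa>0 (y * t) / t powr (1 + \<alpha>)) * indicator {1..} t)
            + ennreal C * (ennreal (t powr (-1 - \<alpha>)) * indicator {1..} t) \<partial>lborel)"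
  proof (rule nn_integral_mono)
    fix t :: real
    show "ennreal (\<sigma> (y * t) / t powr (1 + \<alpha>)) * indicator {1..} t
       \<le> ennreal C * (ennreal (\<kappa>0 (y * t) / t powr (1 + \<alpha>)) * indicator {1..} t)
            + ennreal C * (ennreal (t powr (-1 - \<alpha>)) * indicator {1..} t)"
    proof (cases "t \<ge> 1")
      case True
      have yt: "y * t \<ge> 0" using y True by simp
      have "\<sigma> (y * t) / t powr (1 + \<alpha>) \<le> (C * \<kappa> (y * t) + C) / t powr (1 + \<alpha>)"
        using bound[OF yt] True by (intro divide_right_mono) auto
      also have "\<dots> = C * (\<kappa> (y * t) / t powr (1 + \<alpha>)) + C * t powr (-1 - \<alpha>)"
        using powr_minus_one_minus[of t \<alpha>] True by (simp add: add_divide_distrib)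
      finally show ?thesis
        using True yt C \<kappa>_nonneg unfolding \<kappa>0_def
        by (simp add: ennreal_leI ennreal_plus[symmetric] ennreal_mult[symmetric]
            del: ennreal_plus ennreal_mult')
    qed simp
  qed
  also have "\<dots> = ennreal C * (\<integral>\<^sup>+ t. ennreal (\<kappa>0 (y * t) / t powr (1 + \<alpha>)) * indicator {1..} t \<partial>lborel)
      + ennreal C * (\<integral>\<^sup>+ t. ennreal (t powr (-1 - \<alpha>)) * indicator {1..} t \<partial>lborel)"
    by (subst nn_integral_add) (measurable, simp add: nn_integral_cmult)
  also have "(\<integral>\<^sup>+ t. ennreal (\<kappa>0 (y * t) / t powr (1 + \<alpha>)) * indicator {1..} t \<partial>lborel)
      = (\<integral>\<^sup>+ t\<in>{1..}. ennreal (\<kappa> (y * t) / t powr (1 + \<alpha>)) \<partial>lborel)"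
    using y by (intro nn_integral_cong) (auto simp: indicator_def \<kappa>0_def)
  also have "ennreal C * (\<integral>\<^sup>+ t. ennreal (t powr (-1 - \<alpha>)) * indicator {1..} t \<partial>lborel) = ennreal (C / \<alpha>)"
    using nn_integral_powr_tail[OF \<alpha>, of 1] C \<alpha> by (simp add: ennreal_mult[symmetric])
  finally show ?thesis .
qed

lemma integral_condition_transfer:
  fixes \<sigma> \<kappa> :: "real \<Rightarrow> real"
  assumes \<kappa>_mono: "mono_on {0..} \<kappa>" and \<kappa>_nonneg: "\<forall>t\<ge>0. \<kappa> t \<ge> 0"
    and \<sigma>_nonneg: "\<forall>t\<ge>0. \<sigma> t \<ge> 0" and sim: "sim_on {0..} \<sigma> \<kappa>"
    and \<kappa>_int: "integral_condition \<kappa> \<alpha>" and \<alpha>: "\<alpha> > 0"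
  shows "integral_condition \<sigma> \<alpha>"
proof -
  obtain C0 where C0: "C0 \<ge> 1" and sim0: "\<And>t. t \<ge> 0 \<Longrightarrow> \<kappa> t / C0 - C0 \<le> \<sigma> t \<and> \<sigma> t \<le> C0 * \<kappa> t + C0"
    using sim unfolding sim_on_def by auto
  obtain C where C: "C > 0" and \<kappa>_bound: "\<And>y. y > 0 \<Longrightarrow>
      (\<integral>\<^sup>+ t\<in>{1..}. ennreal (\<kappa> (y * t) / t powr (1 + \<alpha>)) \<partial>lborel) \<le> ennreal (C * \<kappa> y + C)"
    using \<kappa>_int unfolding integral_condition_def by blast
  define D where "D = C0 * C * C0 + C0 * C * C0\<^sup>2 + C0 * C + C0 / \<alpha>"
  have D: "D > 0" unfolding D_def using C0 C \<alpha> by (intro add_pos_pos) auto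
  have "(\<integral>\<^sup>+ t\<in>{1..}. ennreal (\<sigma> (y * t) / t powr (1 + \<alpha>)) \<partial>lborel) \<le> ennreal (D * \<sigma> y + D)"
    if y: "y > 0" for y
  proof -
    have "(\<integral>\<^sup>+ t\<in>{1..}. ennreal (\<sigma> (y * t) / t powr (1 + \<alpha>)) \<partial>lborel)
        \<le> ennreal C0 * (\<integral>\<^sup>+ t\<in>{1..}. ennreal (\<kappa> (y * t) / t powr (1 + \<alpha>)) \<partial>lborel) + ennreal (C0 / \<alpha>)"
      by (rule dilation_integral_le_of_bound[OF \<kappa>_mono \<kappa>_nonneg _ _ \<alpha> y]) (use sim0 C0 in auto)
    also have "\<dots> \<le> ennreal C0 * ennreal (C * \<kappa> y + C) + ennreal (C0 / \<alpha>)"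
      using \<kappa>_bound[OF y] by (intro add_right_mono mult_left_mono) auto
    also have "\<dots> = ennreal (C0 * (C * \<kappa> y + C) + C0 / \<alpha>)"
      using C0 C \<kappa>_nonneg y \<alpha> by (simp add: ennreal_plus ennreal_mult)
    also have "\<dots> \<le> ennreal (D * \<sigma> y + D)"
    proof (rule ennreal_leI)
      have "\<kappa> y \<le> C0 * \<sigma> y + C0\<^sup>2"
        using sim0[of y] y C0 by (simp add: field_simps power2_eq_square)
      hence "C0 * (C * \<kappa> y + C) + C0 / \<alpha> \<le> C0 * (C * (C0 * \<sigma> y + C0\<^sup>2) + C) + C0 / \<alpha>"
        using C0 C by (intro add_right_mono mult_left_mono) auto
      also have "\<dots> = (C0 * C * C0) * \<sigma> y + (C0 * C * C0\<^sup>2 + C0 * C + C0 / \<alpha>)"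
        by (simp add: algebra_simps)
      also have "\<dots> \<le> D * \<sigma> y + D"
        unfolding D_def using C0 C \<alpha> \<sigma>_nonneg y by (intro add_mono mult_right_mono) auto
      finally show "C0 * (C * \<kappa> y + C) + C0 / \<alpha> \<le> D * \<sigma> y + D" .
    qed
    finally show ?thesis .
  qed
  thus ?thesis unfolding integral_condition_def using D by blast
qed

lemma concave_on_nonneg_reals_if_supporting_lines:
  fixes g :: "real \<Rightarrow> real"
  assumes support: "\<And>w. w > 0 \<Longrightarrow> \<exists>m. \<forall>u\<ge>0. g u \<le> g w + m * (u - w)"
  shows "concave_on {0..} g"
  unfolding concave_on_def
proof (rule convex_onI)
  fix t x1 x2 :: real assume t: "0 < t" "t < 1" and x: "x1 \<in> {0..}" "x2 \<in> {0..}"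
  define w where "w = (1 - t) * x1 + t * x2"
  show "- g ((1 - t) *\<^sub>R x1 + t *\<^sub>R x2) \<le> (1 - t) * - g x1 + t * - g x2"
  proof (cases "w = 0")
    case True
    moreover have "(1 - t) * x1 \<ge> 0" "t * x2 \<ge> 0" using t x by auto
    ultimately have "(1 - t) * x1 = 0" "t * x2 = 0" unfolding w_def by linarith+
    hence "x1 = 0" "x2 = 0" using t by auto
    thus ?thesis by (simp add: algebra_simps)
  next
    case False
    moreover have "w \<ge> 0" using t x unfolding w_def by (intro add_nonneg_nonneg) auto
    ultimately have "w > 0" by simp
    then obtain m where m: "\<And>u. u \<ge> 0 \<Longrightarrow> g u \<le> g w + m * (u - w)" using support by blast
    have "(1 - t) * g x1 + t * g x2 \<le> (1 - t) * (g w + m * (x1 - w)) + t * (g w + m * (x2 - w))"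
      using m x t by (intro add_mono mult_left_mono) auto
    also have "\<dots> = g w" unfolding w_def by (simp add: algebra_simps)
    finally show ?thesis unfolding w_def by simp
  qed
qed (rule convex_real_interval)

section \<open>Upper type and dilation bounds\<close>

locale unbounded_weight =
  fixes \<sigma> :: "real \<Rightarrow> real" and \<alpha> a :: real
  assumes nonneg: "\<forall>t\<ge>0. \<sigma> t \<ge> 0"
    and mono: "mono_on {0..} \<sigma>"
    and lim: "filterlim \<sigma> at_top at_top"
    and alpha_pos: "\<alpha> > 0"
    and a_nonneg: "a \<ge> 0"
    and pos: "\<forall>x\<ge>a. \<sigma> x > 0"
begin

lemma weight_mono: "0 \<le> x \<Longrightarrow> x \<le> y \<Longrightarrow> \<sigma> x \<le> \<sigma> y"
  using mono by (auto simp: mono_on_def)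

lemma weight_pos: "a \<le> x \<Longrightarrow> \<sigma> x > 0"
  using pos by auto

lemma weight_nonneg: "0 \<le> x \<Longrightarrow> \<sigma> x \<ge> 0"
  using nonneg by auto

lemma eventually_weight_pos: "\<forall>\<^sub>F t in at_top. \<sigma> t > 0"
  using eventually_ge_at_top[of a] by eventually_elim (rule weight_pos)

lemma eventually_weight_pos_nat: "\<forall>\<^sub>F p in sequentially. \<sigma> (real p) > 0"
  using eventually_ge_at_top[of "nat \<lceil>a\<rceil>"] by eventually_elim (rule weight_pos, linarith)

definition upper_type :: "real \<Rightarrow> real \<Rightarrow> bool" where
  "upper_type \<gamma> M \<longleftrightarrow> M > 0 \<and> (\<forall>x\<ge>a. \<forall>l\<ge>1. \<sigma> (l * x) \<le> M * l powr \<gamma> * \<sigma> x)"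

definition upper_type_below_alpha :: bool where
  "upper_type_below_alpha \<longleftrightarrow> (\<exists>\<gamma> M. 0 < \<gamma> \<and> \<gamma> < \<alpha> \<and> upper_type \<gamma> M)"

definition eventual_dilation_bound :: bool where
  "eventual_dilation_bound \<longleftrightarrow>
     (\<exists>K>1. \<exists>\<rho><K powr \<alpha>. \<forall>\<^sub>F t in at_top. \<sigma> (K * t) \<le> \<rho> * \<sigma> t)"

definition integer_dilation_bound :: bool where
  "integer_dilation_bound \<longleftrightarrow>
     (\<exists>k::nat. k \<ge> 2 \<and>
        (\<exists>\<rho><real k powr \<alpha>. \<forall>\<^sub>F p in sequentially. \<sigma> (real k * real p) \<le> \<rho> * \<sigma> (real p)))"

lemma upper_typeD:
  assumes "upper_type \<gamma> M" "a \<le> x" "0 < x" "x \<le> y"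
  shows "\<sigma> y \<le> M * (y / x) powr \<gamma> * \<sigma> x"
  using assms mult_imp_le_div_pos[of x 1 y] unfolding upper_type_def
  by (metis divide_self_if mult_cancel_right1 nonzero_eq_divide_eq order.strict_iff_not real_divide_square_eq)

lemma upper_type_mono_exponent:
  assumes "upper_type \<gamma> M" "\<gamma> \<le> \<gamma>'"
  shows "upper_type \<gamma>' M"
proof -
  have "M * l powr \<gamma> * \<sigma> x \<le> M * l powr \<gamma>' * \<sigma> x" if "x \<ge> a" "l \<ge> 1" for x l
    using assms weight_pos[OF that(1)] that
    by (intro mult_right_mono mult_left_mono powr_mono) (auto simp: upper_type_def)
  thus ?thesis using assms(1) unfolding upper_type_def by (meson order.trans)
qed

text \<open>A power bound on some \<open>[b, \<infinity>)\<close> extends to \<open>[a, \<infinity>)\<close>, since \<open>\<sigma>\<close> is bounded away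
  from \<open>0\<close> and \<open>\<infinity>\<close> on \<open>[a, b]\<close>.\<close>
lemma upper_type_below_alphaI:
  assumes "b \<ge> a" "0 < \<gamma>" "\<gamma> < \<alpha>" "M > 0"
    and bound: "\<And>x l. x \<ge> b \<Longrightarrow> l \<ge> 1 \<Longrightarrow> \<sigma> (l * x) \<le> M * l powr \<gamma> * \<sigma> x"
  shows upper_type_below_alpha
proof -
  define M' where "M' = M * \<sigma> b / \<sigma> a"
  have \<sigma>ab: "0 < \<sigma> a" "\<sigma> a \<le> \<sigma> b" using weight_pos weight_mono a_nonneg assms(1) by auto
  hence MM': "M \<le> M'" unfolding M'_def using assms(4) by (simp add: field_simps)
  have "\<sigma> (l * x) \<le> M' * l powr \<gamma> * \<sigma> x" if x: "x \<ge> a" and l: "l \<ge> 1" for x l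
  proof (cases "x \<ge> b")
    case True
    have "\<sigma> (l * x) \<le> M * l powr \<gamma> * \<sigma> x" using bound True l by blast
    also have "\<dots> \<le> M' * l powr \<gamma> * \<sigma> x"
      using MM' weight_pos[OF x] by (intro mult_right_mono) auto
    finally show ?thesis .
  next
    case False
    have "\<sigma> (l * x) \<le> \<sigma> (l * b)" using False l x a_nonneg by (intro weight_mono) auto
    also have "\<dots> \<le> M * l powr \<gamma> * \<sigma> b" using bound l by blast
    also have "\<dots> = M' * l powr \<gamma> * \<sigma> a" unfolding M'_def using \<sigma>ab by simp
    also have "\<dots> \<le> M' * l powr \<gamma> * \<sigma> x"
      using MM' assms(4) x a_nonneg by (intro mult_left_mono weight_mono) auto
    finally show ?thesis .
  qed
  hence "upper_type \<gamma> M'" unfolding upper_type_def using MM' assms(4) by auto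
  thus ?thesis unfolding upper_type_below_alpha_def using assms by blast
qed

text \<open>Iterating a one-step bound along the geometric sequence \<open>K\<^sup>n t\<close> and filling the
  gaps by monotonicity.\<close>
lemma upper_type_of_dilation_step:
  assumes K: "K > 1" and S: "S \<subseteq> {0..}" "t \<in> S" and l: "l \<ge> 1"
    and closed: "\<And>x. x \<in> S \<Longrightarrow> K * x \<in> S"
    and step: "\<And>x. x \<in> S \<Longrightarrow> \<sigma> (K * x) \<le> K powr \<gamma> * \<sigma> x"
    and \<gamma>: "\<gamma> > 0"
  shows "\<sigma> (l * t) \<le> K powr \<gamma> * l powr \<gamma> * \<sigma> t"
proof -
  obtain n where n: "l \<le> K ^ n" "K ^ n \<le> K * l" using exists_power_between[OF K l] by blast
  have t: "t \<ge> 0" "\<sigma> t \<ge> 0" using S weight_nonneg by auto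
  have "\<sigma> (l * t) \<le> \<sigma> (K ^ n * t)" using n l t by (intro weight_mono mult_right_mono) auto
  also have "\<dots> \<le> (K powr \<gamma>) ^ n * \<sigma> t"
    using iterate_mult_le[of S K \<sigma> "K powr \<gamma>", OF closed step _ S(2)] by simp
  also have "(K powr \<gamma>) ^ n = (K ^ n) powr \<gamma>"
    using K by (simp add: powr_realpow[symmetric] powr_powr mult.commute)
  also have "\<dots> \<le> (K * l) powr \<gamma>" using n K \<gamma> by (intro powr_mono2) auto
  also have "\<dots> = K powr \<gamma> * l powr \<gamma>" using K l by (simp add: powr_mult)
  finally show ?thesis using t by (simp add: mult_right_mono)
qed

lemma eventual_dilation_bound_imp_upper_type:
  assumes eventual_dilation_bound
  shows upper_type_below_alpha
proof -
  obtain K \<rho> where K: "K > 1" and \<rho>: "\<rho> < K powr \<alpha>"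
    and ev: "\<forall>\<^sub>F t in at_top. \<sigma> (K * t) \<le> \<rho> * \<sigma> t"
    using assms unfolding eventual_dilation_bound_def by blast
  obtain \<gamma> where \<gamma>: "0 < \<gamma>" "\<gamma> < \<alpha>" "\<rho> \<le> K powr \<gamma>"
    using obtain_exponent_below[OF K alpha_pos \<rho>] .
  obtain T0 where T0: "\<And>t. t \<ge> T0 \<Longrightarrow> \<sigma> (K * t) \<le> \<rho> * \<sigma> t"
    using ev unfolding eventually_at_top_linorder by blast
  define T where "T = max T0 a"
  have T: "T \<ge> a" "T \<ge> 0" unfolding T_def using a_nonneg by auto
  have closed: "K * x \<in> {T..}" if "x \<in> {T..}" for x
    using that K T by (simp add: order_trans[OF _ mult_le_cancel_right1[THEN iffD2]])
  have step: "\<sigma> (K * x) \<le> K powr \<gamma> * \<sigma> x" if "x \<in> {T..}" for x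
  proof -
    have "\<sigma> (K * x) \<le> \<rho> * \<sigma> x" using T0 that unfolding T_def by simp
    also have "\<dots> \<le> K powr \<gamma> * \<sigma> x" using \<gamma> weight_pos[of x] that T by (intro mult_right_mono) auto
    finally show ?thesis .
  qed
  show ?thesis
    using upper_type_of_dilation_step[OF K _ _ _ closed step \<gamma>(1)] T K \<gamma>
    by (intro upper_type_below_alphaI[of T \<gamma> "K powr \<gamma>"]) auto
qed

lemma upper_type_from_integers:
  assumes P: "P \<ge> 1" and M: "M \<ge> 0" and \<gamma>: "\<gamma> \<ge> 0"
    and bound: "\<And>p l. p \<ge> P \<Longrightarrow> l \<ge> 1 \<Longrightarrow> \<sigma> (l * real p) \<le> M * l powr \<gamma> * \<sigma> (real p)"
    and x: "x \<ge> real P" and l: "l \<ge> 1"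
  shows "\<sigma> (l * x) \<le> 2 powr \<gamma> * M * l powr \<gamma> * \<sigma> x"
proof -
  define p where "p = nat \<lfloor>x\<rfloor>"
  have fl: "real_of_int \<lfloor>x\<rfloor> \<le> x" "x < real_of_int \<lfloor>x\<rfloor> + 1" "\<lfloor>x\<rfloor> \<ge> int P"
    using x by linarith+
  hence "real p = real_of_int \<lfloor>x\<rfloor>" unfolding p_def by simp
  hence p: "p \<ge> P" "real p \<le> x" "x \<le> 2 * real p" using fl P by linarith+
  have "\<sigma> (l * x) \<le> \<sigma> ((2 * l) * real p)" using p l by (intro weight_mono) auto
  also have "\<dots> \<le> M * (2 * l) powr \<gamma> * \<sigma> (real p)" using bound[OF p(1)] l by simp
  also have "\<dots> \<le> M * (2 * l) powr \<gamma> * \<sigma> x" using p M by (intro mult_left_mono weight_mono) auto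
  also have "M * (2 * l) powr \<gamma> = 2 powr \<gamma> * M * l powr \<gamma>" using l by (simp add: powr_mult)
  finally show ?thesis .
qed

lemma integer_dilation_bound_imp_upper_type:
  assumes integer_dilation_bound
  shows upper_type_below_alpha
proof -
  obtain k :: nat and \<rho> where k: "k \<ge> 2" and \<rho>: "\<rho> < real k powr \<alpha>"
    and ev: "\<forall>\<^sub>F p in sequentially. \<sigma> (real k * real p) \<le> \<rho> * \<sigma> (real p)"
    using assms unfolding integer_dilation_bound_def by blast
  define K where "K = real k"
  have K: "K > 1" using k unfolding K_def by simp
  obtain \<gamma> where \<gamma>: "0 < \<gamma>" "\<gamma> < \<alpha>" "\<rho> \<le> K powr \<gamma>"
    using obtain_exponent_below[OF K alpha_pos] \<rho> unfolding K_def by blast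
  obtain P0 where P0: "\<And>p. p \<ge> P0 \<Longrightarrow> \<sigma> (real k * real p) \<le> \<rho> * \<sigma> (real p)"
    using ev unfolding eventually_sequentially by blast
  define P where "P = max P0 (nat \<lceil>a\<rceil> + 1)"
  have P: "real P \<ge> a" "P \<ge> 1" unfolding P_def by linarith+
  define S where "S = real ` {P..}"
  have closed: "K * x \<in> S" if x: "x \<in> S" for x
  proof -
    obtain p where "x = real p" "p \<ge> P" using x unfolding S_def by blast
    moreover have "p \<le> k * p" using k by simp
    ultimately show ?thesis unfolding S_def K_def by (metis atLeast_iff image_eqI le_trans of_nat_mult)
  qed
  have step: "\<sigma> (K * x) \<le> K powr \<gamma> * \<sigma> x" if x: "x \<in> S" for x
  proof -
    obtain p where p: "x = real p" "p \<ge> P" using x unfolding S_def by blast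
    have "\<sigma> (K * x) \<le> \<rho> * \<sigma> x" using P0[of p] p unfolding P_def K_def by auto
    also have "\<dots> \<le> K powr \<gamma> * \<sigma> x" using \<gamma> weight_pos[of x] P p by (intro mult_right_mono) auto
    finally show ?thesis .
  qed
  have int_bound: "\<sigma> (l * real p) \<le> K powr \<gamma> * l powr \<gamma> * \<sigma> (real p)" if "p \<ge> P" "l \<ge> 1" for p l
    using upper_type_of_dilation_step[OF K _ _ _ closed step \<gamma>(1), of "real p" l] that
    unfolding S_def by (simp add: image_subset_iff)
  have bound: "\<sigma> (l * x) \<le> 2 powr \<gamma> * K powr \<gamma> * l powr \<gamma> * \<sigma> x" if "x \<ge> real P" "l \<ge> 1" for x l
    by (rule upper_type_from_integers[OF P(2) _ _ int_bound that]) (use \<gamma> in auto)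
  show ?thesis using upper_type_below_alphaI[OF P(1) \<gamma>(1,2) _ bound] K by simp
qed

lemma upper_type_imp_eventual_dilation_bound:
  assumes upper_type_below_alpha
  shows eventual_dilation_bound
proof -
  obtain \<gamma> M where \<gamma>: "0 < \<gamma>" "\<gamma> < \<alpha>" and H: "upper_type \<gamma> M"
    using assms unfolding upper_type_below_alpha_def by blast
  obtain n :: nat where n: "n \<ge> 2" "M * real n powr \<gamma> < real n powr \<alpha>"
    using exists_nat_powr_gap[OF \<gamma>] H unfolding upper_type_def by blast
  have "\<forall>\<^sub>F t in at_top. \<sigma> (real n * t) \<le> (M * real n powr \<gamma>) * \<sigma> t"
    using eventually_ge_at_top[of a] by eventually_elim (use H n in \<open>auto simp: upper_type_def\<close>)
  thus ?thesis unfolding eventual_dilation_bound_def using n by (intro exI[of _ "real n"]) auto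
qed

lemma upper_type_imp_integer_dilation_bound:
  assumes upper_type_below_alpha
  shows integer_dilation_bound
proof -
  obtain \<gamma> M where \<gamma>: "0 < \<gamma>" "\<gamma> < \<alpha>" and H: "upper_type \<gamma> M"
    using assms unfolding upper_type_below_alpha_def by blast
  obtain n :: nat where n: "n \<ge> 2" "M * real n powr \<gamma> < real n powr \<alpha>"
    using exists_nat_powr_gap[OF \<gamma>] H unfolding upper_type_def by blast
  have "\<forall>\<^sub>F p in sequentially. \<sigma> (real n * real p) \<le> (M * real n powr \<gamma>) * \<sigma> (real p)"
    using eventually_ge_at_top[of "nat \<lceil>a\<rceil>"]
  proof eventually_elim
    case (elim p)
    then have "real p \<ge> a" by linarith
    then show ?case using H n by (auto simp: upper_type_def)
  qed
  thus ?thesis unfolding integer_dilation_bound_def using n by (intro exI[of _ n]) auto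
qed

lemma upper_type_iff_eventual_dilation_bound: "upper_type_below_alpha \<longleftrightarrow> eventual_dilation_bound"
  using upper_type_imp_eventual_dilation_bound eventual_dilation_bound_imp_upper_type by blast

lemma upper_type_iff_integer_dilation_bound: "upper_type_below_alpha \<longleftrightarrow> integer_dilation_bound"
  using upper_type_imp_integer_dilation_bound integer_dilation_bound_imp_upper_type by blast

lemma eventual_dilation_boundI:
  assumes T: "T > 0"
    and contraction: "\<exists>n>0. \<exists>\<theta><1. \<forall>y\<in>{T..}. \<sigma> (2 ^ n * y) / (2 ^ n * y) powr \<alpha> \<le> \<theta> * (\<sigma> y / y powr \<alpha>)"
  shows eventual_dilation_bound
proof -
  obtain n \<theta> where n: "n > 0" "\<theta> < 1"
    and bound: "\<And>y. y \<ge> T \<Longrightarrow> \<sigma> (2 ^ n * y) / (2 ^ n * y) powr \<alpha> \<le> \<theta> * (\<sigma> y / y powr \<alpha>)"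
    using contraction by auto
  define K :: real where "K = 2 ^ n"
  have K: "K > 1" unfolding K_def using n by simp
  have "\<sigma> (K * y) \<le> (\<theta> * K powr \<alpha>) * \<sigma> y" if y: "y \<ge> T" for y
  proof -
    have "y > 0" using y T by simp
    thus ?thesis using bound[OF y] K unfolding K_def[symmetric]
      by (simp add: powr_mult field_simps)
  qed
  hence "\<forall>\<^sub>F y in at_top. \<sigma> (K * y) \<le> (\<theta> * K powr \<alpha>) * \<sigma> y"
    unfolding eventually_at_top_linorder by blast
  moreover have "\<theta> * K powr \<alpha> < K powr \<alpha>" using n K by simp
  ultimately show ?thesis unfolding eventual_dilation_bound_def using K by blast
qed

lemma integer_dilation_boundI:
  assumes P: "P > 0"
    and contraction: "\<exists>n>0. \<exists>\<theta><1. \<forall>p\<in>{P..}.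
      \<sigma> (real (2 ^ n * p)) / real (2 ^ n * p) powr \<alpha> \<le> \<theta> * (\<sigma> (real p) / real p powr \<alpha>)"
  shows integer_dilation_bound
proof -
  obtain n \<theta> where n: "n > 0" "\<theta> < 1"
    and bound: "\<And>p. p \<ge> P \<Longrightarrow>
      \<sigma> (real (2 ^ n * p)) / real (2 ^ n * p) powr \<alpha> \<le> \<theta> * (\<sigma> (real p) / real p powr \<alpha>)"
    using contraction by auto
  define k :: nat where "k = 2 ^ n"
  have k: "k \<ge> 2" unfolding k_def using n by (simp add: self_le_power)
  have "\<sigma> (real k * real p) \<le> (\<theta> * real k powr \<alpha>) * \<sigma> (real p)" if p: "p \<ge> P" for p
  proof -
    have "real p > 0" using p P by simp
    thus ?thesis using bound[OF p] k unfolding k_def[symmetric]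
      by (simp add: powr_mult field_simps)
  qed
  hence "\<forall>\<^sub>F p in sequentially. \<sigma> (real k * real p) \<le> (\<theta> * real k powr \<alpha>) * \<sigma> (real p)"
    unfolding eventually_sequentially by blast
  moreover have "\<theta> * real k powr \<alpha> < real k powr \<alpha>" using n k by simp
  ultimately show ?thesis unfolding integer_dilation_bound_def using k by blast
qed

end

section \<open>The dilation conditions\<close>

context unbounded_weight
begin

lemma limsup_dilation_iff:
  "(\<exists>K>1. Limsup at_top (\<lambda>t. ereal (\<sigma> (K * t) / \<sigma> t)) < ereal (K powr \<alpha>))
     \<longleftrightarrow> eventual_dilation_bound"
  unfolding eventual_dilation_bound_def Limsup_ratio_less_iff[OF eventually_weight_pos] ..

lemma limsup_integer_dilation_iff:
  "(\<exists>k::nat. k \<ge> 2 \<and>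
      limsup (\<lambda>p::nat. ereal (\<sigma> (real k * real p) / \<sigma> (real p))) < ereal (real k powr \<alpha>))
     \<longleftrightarrow> integer_dilation_bound"
  unfolding integer_dilation_bound_def Limsup_ratio_less_iff[OF eventually_weight_pos_nat] ..

lemma almost_decreasing_imp_upper_type:
  assumes "\<exists>\<gamma>. 0 < \<gamma> \<and> \<gamma> < \<alpha> \<and>
      (a > 0 \<longrightarrow> almost_decreasing_from a (\<lambda>t. \<sigma> t / t powr \<gamma>)) \<and>
      (a = 0 \<longrightarrow> (\<forall>\<epsilon>>0. almost_decreasing_from \<epsilon> (\<lambda>t. \<sigma> t / t powr \<gamma>)))"
  shows upper_type_below_alpha
proof -
  from assms obtain \<gamma> where \<gamma>: "0 < \<gamma>" "\<gamma> < \<alpha>"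
    and dec: "a > 0 \<longrightarrow> almost_decreasing_from a (\<lambda>t. \<sigma> t / t powr \<gamma>)"
    "a = 0 \<longrightarrow> (\<forall>\<epsilon>>0. almost_decreasing_from \<epsilon> (\<lambda>t. \<sigma> t / t powr \<gamma>))" by blast
  define b where "b = (if a > 0 then a else 1)"
  have b: "b \<ge> a" "b > 0" "almost_decreasing_from b (\<lambda>t. \<sigma> t / t powr \<gamma>)"
    using dec a_nonneg unfolding b_def by auto
  then obtain m where m: "m > 0"
    "\<And>x y. b \<le> x \<Longrightarrow> x \<le> y \<Longrightarrow> m * (\<sigma> y / y powr \<gamma>) \<le> \<sigma> x / x powr \<gamma>"
    unfolding almost_decreasing_from_def by blast
  have bound: "\<sigma> (l * x) \<le> (1 / m) * l powr \<gamma> * \<sigma> x" if x: "x \<ge> b" and l: "l \<ge> 1" for x l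
  proof -
    have "x > 0" using x b by auto
    moreover have "m * (\<sigma> (l * x) / (l * x) powr \<gamma>) \<le> \<sigma> x / x powr \<gamma>"
      using m(2)[OF x] l \<open>x > 0\<close> by simp
    ultimately show ?thesis using l m(1) by (simp add: powr_mult field_simps)
  qed
  show upper_type_below_alpha by (rule upper_type_below_alphaI[OF b(1) \<gamma> _ bound]) (use m in simp)
qed

lemma upper_type_imp_almost_decreasing:
  assumes upper_type_below_alpha
  shows "\<exists>\<gamma>. 0 < \<gamma> \<and> \<gamma> < \<alpha> \<and>
      (a > 0 \<longrightarrow> almost_decreasing_from a (\<lambda>t. \<sigma> t / t powr \<gamma>)) \<and>
      (a = 0 \<longrightarrow> (\<forall>\<epsilon>>0. almost_decreasing_from \<epsilon> (\<lambda>t. \<sigma> t / t powr \<gamma>)))"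
proof -
  from assms obtain \<gamma> M where \<gamma>: "0 < \<gamma>" "\<gamma> < \<alpha>" and H: "upper_type \<gamma> M"
    unfolding upper_type_below_alpha_def by blast
  have "almost_decreasing_from b (\<lambda>t. \<sigma> t / t powr \<gamma>)" if b: "b \<ge> a" "b > 0" for b
    unfolding almost_decreasing_from_def
  proof (intro exI[of _ "1 / M"] conjI allI impI)
    show "1 / M > 0" using H by (simp add: upper_type_def)
    fix x y :: real assume x: "b \<le> x" and xy: "x \<le> y"
    have "\<sigma> y \<le> M * (y / x) powr \<gamma> * \<sigma> x" using upper_typeD[OF H _ _ xy] x b by simp
    thus "1 / M * (\<sigma> y / y powr \<gamma>) \<le> \<sigma> x / x powr \<gamma>"
      using H x xy b by (simp add: upper_type_def powr_divide field_simps)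
  qed
  thus ?thesis using \<gamma> by (intro exI[of _ \<gamma>]) auto
qed

lemma almost_decreasing_iff_upper_type:
  "(\<exists>\<gamma>. 0 < \<gamma> \<and> \<gamma> < \<alpha> \<and>
      (a > 0 \<longrightarrow> almost_decreasing_from a (\<lambda>t. \<sigma> t / t powr \<gamma>)) \<and>
      (a = 0 \<longrightarrow> (\<forall>\<epsilon>>0. almost_decreasing_from \<epsilon> (\<lambda>t. \<sigma> t / t powr \<gamma>)))) \<longleftrightarrow> upper_type_below_alpha"
  using almost_decreasing_imp_upper_type upper_type_imp_almost_decreasing by blast

lemma uniform_integer_dilation_imp_upper_type:
  assumes "\<forall>\<theta>. 0 < \<theta> \<and> \<theta> < 1 \<longrightarrow> (\<exists>k::nat. k \<ge> 2 \<and>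
      (\<forall>p::nat. p \<ge> nat \<lceil>a\<rceil> + 1 \<longrightarrow> \<sigma> (real k * real p) \<le> \<theta> * real k powr \<alpha> * \<sigma> (real p)))"
  shows upper_type_below_alpha
proof -
  obtain k :: nat where k: "k \<ge> 2"
    and kp: "\<And>p. p \<ge> nat \<lceil>a\<rceil> + 1 \<Longrightarrow> \<sigma> (real k * real p) \<le> 1/2 * real k powr \<alpha> * \<sigma> (real p)"
    using spec[OF assms, of "1/2"] by auto
  have "\<forall>\<^sub>F p in sequentially. \<sigma> (real k * real p) \<le> (1/2 * real k powr \<alpha>) * \<sigma> (real p)"
    using eventually_ge_at_top[of "nat \<lceil>a\<rceil> + 1"] by eventually_elim (rule kp)
  moreover have "1/2 * real k powr \<alpha> < real k powr \<alpha>" using k by simp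
  ultimately show upper_type_below_alpha
    using k integer_dilation_bound_imp_upper_type unfolding integer_dilation_bound_def by blast
qed

lemma upper_type_imp_uniform_integer_dilation:
  assumes upper_type_below_alpha
  shows "\<forall>\<theta>. 0 < \<theta> \<and> \<theta> < 1 \<longrightarrow> (\<exists>k::nat. k \<ge> 2 \<and>
      (\<forall>p::nat. p \<ge> nat \<lceil>a\<rceil> + 1 \<longrightarrow> \<sigma> (real k * real p) \<le> \<theta> * real k powr \<alpha> * \<sigma> (real p)))"
proof -
  from assms obtain \<gamma> M where \<gamma>: "0 < \<gamma>" "\<gamma> < \<alpha>" and H: "upper_type \<gamma> M"
    unfolding upper_type_below_alpha_def by blast
  show ?thesis
  proof (intro allI impI)
    fix \<theta> :: real assume \<theta>: "0 < \<theta> \<and> \<theta> < 1"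
    obtain n :: nat where n: "n \<ge> 2" "(M / \<theta>) * real n powr \<gamma> < real n powr \<alpha>"
      using exists_nat_powr_gap[OF \<gamma>, of "M / \<theta>"] H \<theta> by (auto simp: upper_type_def)
    have n': "M * real n powr \<gamma> \<le> \<theta> * real n powr \<alpha>" using n(2) \<theta> by (simp add: field_simps)
    have "\<sigma> (real n * real p) \<le> \<theta> * real n powr \<alpha> * \<sigma> (real p)" if p: "p \<ge> nat \<lceil>a\<rceil> + 1" for p
    proof -
      have pa: "real p \<ge> a" using p by linarith
      have "\<sigma> (real n * real p) \<le> M * real n powr \<gamma> * \<sigma> (real p)"
        using H pa n by (simp add: upper_type_def)
      also have "\<dots> \<le> \<theta> * real n powr \<alpha> * \<sigma> (real p)"
        using n' weight_pos[OF pa] by (intro mult_right_mono) auto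
      finally show ?thesis .
    qed
    thus "\<exists>k::nat. k \<ge> 2 \<and> (\<forall>p::nat. p \<ge> nat \<lceil>a\<rceil> + 1 \<longrightarrow>
        \<sigma> (real k * real p) \<le> \<theta> * real k powr \<alpha> * \<sigma> (real p))"
      using n(1) by blast
  qed
qed

lemma uniform_integer_dilation_iff_upper_type:
  "(\<forall>\<theta>. 0 < \<theta> \<and> \<theta> < 1 \<longrightarrow> (\<exists>k::nat. k \<ge> 2 \<and>
      (\<forall>p::nat. p \<ge> nat \<lceil>a\<rceil> + 1 \<longrightarrow> \<sigma> (real k * real p) \<le> \<theta> * real k powr \<alpha> * \<sigma> (real p)))) \<longleftrightarrow> upper_type_below_alpha"
  using uniform_integer_dilation_imp_upper_type upper_type_imp_uniform_integer_dilation by blast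

lemma small_scale_limit_imp_upper_type:
  assumes lim0: "((\<lambda>\<epsilon>. Limsup at_top (\<lambda>t. ereal (\<epsilon> powr \<alpha> * \<sigma> t / \<sigma> (\<epsilon> * t)))) \<longlongrightarrow> 0) (at_right 0)"
  shows upper_type_below_alpha
proof -
  have "\<forall>\<^sub>F \<epsilon> in at_right 0. Limsup at_top (\<lambda>t. ereal (\<epsilon> powr \<alpha> * \<sigma> t / \<sigma> (\<epsilon> * t))) < ereal (1/2)"
    using order_tendstoD(2)[OF lim0, of "ereal (1/2)"] by (simp add: zero_ereal_def)
  moreover have "\<forall>\<^sub>F \<epsilon> in at_right (0::real). \<epsilon> < 1"
    by (simp add: eventually_at_right_field exI[of _ 1])
  moreover have "\<forall>\<^sub>F \<epsilon> in at_right (0::real). 0 < \<epsilon>" by (rule eventually_at_right_less)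
  ultimately have "\<forall>\<^sub>F \<epsilon> in at_right (0::real). 0 < \<epsilon> \<and> \<epsilon> < 1 \<and>
      Limsup at_top (\<lambda>t. ereal (\<epsilon> powr \<alpha> * \<sigma> t / \<sigma> (\<epsilon> * t))) < ereal (1/2)"
    by eventually_elim auto
  then obtain \<epsilon> where \<epsilon>: "0 < \<epsilon>" "\<epsilon> < 1"
    and small: "Limsup at_top (\<lambda>t. ereal (\<epsilon> powr \<alpha> * \<sigma> t / \<sigma> (\<epsilon> * t))) < ereal (1/2)"
    using eventually_happens[of _ "at_right (0::real)"] by force
  obtain T where T: "\<And>t. t \<ge> T \<Longrightarrow> \<epsilon> powr \<alpha> * \<sigma> t / \<sigma> (\<epsilon> * t) < 1/2"
    using Limsup_lessD[OF small] unfolding eventually_at_top_linorder by auto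
  define K where "K = 1 / \<epsilon>"
  have K: "K > 1" using \<epsilon> unfolding K_def by simp
  have "\<forall>\<^sub>F u in at_top. \<sigma> (K * u) \<le> (K powr \<alpha> / 2) * \<sigma> u"
    using eventually_ge_at_top[of "max (\<epsilon> * T) a"]
  proof eventually_elim
    case (elim u)
    have "K * u \<ge> T" using elim \<epsilon> unfolding K_def by (simp add: field_simps)
    hence "\<epsilon> powr \<alpha> * \<sigma> (K * u) < \<sigma> u / 2"
      using T[of "K * u"] weight_pos[of u] elim \<epsilon> unfolding K_def by (simp add: divide_less_eq)
    hence "K powr \<alpha> * (\<epsilon> powr \<alpha> * \<sigma> (K * u)) \<le> K powr \<alpha> * (\<sigma> u / 2)"
      by (intro mult_left_mono) auto
    moreover have "K powr \<alpha> * \<epsilon> powr \<alpha> = 1" using \<epsilon> unfolding K_def by (simp add: powr_divide)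
    ultimately show ?case by (simp add: mult.assoc[symmetric])
  qed
  moreover have "K powr \<alpha> / 2 < K powr \<alpha>" using K by simp
  ultimately show upper_type_below_alpha
    using K eventual_dilation_bound_imp_upper_type unfolding eventual_dilation_bound_def by blast
qed

lemma upper_type_imp_small_scale_limit:
  assumes upper_type_below_alpha
  shows "((\<lambda>\<epsilon>. Limsup at_top (\<lambda>t. ereal (\<epsilon> powr \<alpha> * \<sigma> t / \<sigma> (\<epsilon> * t)))) \<longlongrightarrow> 0) (at_right 0)"
proof -
  from assms obtain \<gamma> M where \<gamma>: "0 < \<gamma>" "\<gamma> < \<alpha>" and H: "upper_type \<gamma> M"
    unfolding upper_type_below_alpha_def by blast
  define g where "g = (\<lambda>\<epsilon>. Limsup at_top (\<lambda>t. ereal (\<epsilon> powr \<alpha> * \<sigma> t / \<sigma> (\<epsilon> * t))))"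
  have bounds: "0 \<le> g \<epsilon> \<and> g \<epsilon> \<le> ereal (M * \<epsilon> powr (\<alpha> - \<gamma>))" if \<epsilon>: "0 < \<epsilon>" "\<epsilon> < 1" for \<epsilon>
  proof -
    have "\<forall>\<^sub>F t in at_top. 0 \<le> ereal (\<epsilon> powr \<alpha> * \<sigma> t / \<sigma> (\<epsilon> * t)) \<and>
                          ereal (\<epsilon> powr \<alpha> * \<sigma> t / \<sigma> (\<epsilon> * t)) \<le> ereal (M * \<epsilon> powr (\<alpha> - \<gamma>))"
      using eventually_ge_at_top[of "max 1 (a / \<epsilon>)"]
    proof eventually_elim
      case (elim t)
      have \<epsilon>t: "\<epsilon> * t \<ge> a" "\<epsilon> * t > 0" "\<epsilon> * t \<le> t" using elim \<epsilon> by (auto simp: field_simps)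
      have "\<sigma> t \<le> M * (t / (\<epsilon> * t)) powr \<gamma> * \<sigma> (\<epsilon> * t)" by (rule upper_typeD[OF H \<epsilon>t])
      also have "t / (\<epsilon> * t) = 1 / \<epsilon>" using \<epsilon>t by simp
      finally have "\<epsilon> powr \<alpha> * \<sigma> t \<le> \<epsilon> powr \<alpha> * (M * (1 / \<epsilon>) powr \<gamma> * \<sigma> (\<epsilon> * t))"
        by (intro mult_left_mono) auto
      also have "\<dots> = M * \<epsilon> powr (\<alpha> - \<gamma>) * \<sigma> (\<epsilon> * t)"
        using \<epsilon> by (simp add: powr_divide powr_diff field_simps)
      finally show ?case using weight_pos[OF \<epsilon>t(1)] weight_nonneg[of t] elim
        by (simp add: divide_le_eq)
    qed
    hence "\<forall>\<^sub>F t in at_top. 0 \<le> ereal (\<epsilon> powr \<alpha> * \<sigma> t / \<sigma> (\<epsilon> * t))"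
      and "\<forall>\<^sub>F t in at_top. ereal (\<epsilon> powr \<alpha> * \<sigma> t / \<sigma> (\<epsilon> * t)) \<le> ereal (M * \<epsilon> powr (\<alpha> - \<gamma>))"
      by (auto elim: eventually_mono)
    thus ?thesis unfolding g_def by (simp add: le_Limsup Limsup_bounded)
  qed
  have ev: "\<forall>\<^sub>F \<epsilon> in at_right (0::real). 0 \<le> g \<epsilon> \<and> g \<epsilon> \<le> ereal (M * \<epsilon> powr (\<alpha> - \<gamma>))"
  proof -
    have "\<forall>\<^sub>F \<epsilon> in at_right (0::real). \<epsilon> < 1"
      by (simp add: eventually_at_right_field exI[of _ 1])
    with eventually_at_right_less[of "0::real"] show ?thesis by eventually_elim (use bounds in auto)
  qed
  have lim0: "((\<lambda>\<epsilon>. ereal (M * \<epsilon> powr (\<alpha> - \<gamma>))) \<longlongrightarrow> 0) (at_right (0::real))"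
  proof -
    have "((\<lambda>\<epsilon>::real. \<epsilon> powr (\<alpha> - \<gamma>)) \<longlongrightarrow> 0) (at_right 0)"
      by (rule tendsto_zero_powrI[of _ _ _ "\<alpha> - \<gamma>"])
        (use \<gamma> in \<open>auto intro: tendsto_ident_at eventually_at_right_less[THEN eventually_mono]\<close>)
    thus ?thesis using tendsto_mult_right_zero by (auto simp: zero_ereal_def)
  qed
  have "(g \<longlongrightarrow> 0) (at_right 0)"
    by (rule tendsto_sandwich[OF _ _ tendsto_const lim0]) (use ev in \<open>auto elim: eventually_mono\<close>)
  thus ?thesis unfolding g_def .
qed

lemma small_scale_limit_iff_upper_type:
  "((\<lambda>\<epsilon>. Limsup at_top (\<lambda>t. ereal (\<epsilon> powr \<alpha> * \<sigma> t / \<sigma> (\<epsilon> * t)))) \<longlongrightarrow> 0) (at_right 0) \<longleftrightarrow> upper_type_below_alpha"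
  using small_scale_limit_imp_upper_type upper_type_imp_small_scale_limit by blast

lemma P_prop_imp_eventual_dilation_bound:
  assumes "\<gamma> > 1 / \<alpha>" "P_prop \<sigma> \<gamma>"
  shows eventual_dilation_bound
proof -
  obtain K where K: "K > 1" "Limsup at_top (\<lambda>t. ereal (\<sigma> (K powr \<gamma> * t) / \<sigma> t)) < ereal K"
    using assms(2) unfolding P_prop_def by blast
  have \<gamma>: "\<gamma> > 0" using assms(1) alpha_pos by (meson divide_pos_pos order.strict_trans zero_less_one)
  define L where "L = K powr \<gamma>"
  have L: "L > 1" unfolding L_def using K \<gamma> by simp
  have "K = L powr (1 / \<gamma>)" unfolding L_def using K \<gamma> by (simp add: powr_powr)
  also have "\<dots> < L powr \<alpha>" using L assms(1) \<gamma> alpha_pos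
    by (intro powr_less_mono) (auto simp: field_simps)
  finally have "Limsup at_top (\<lambda>t. ereal (\<sigma> (L * t) / \<sigma> t)) < ereal (L powr \<alpha>)"
    using K(2) unfolding L_def by (simp add: order.strict_trans)
  thus ?thesis using L limsup_dilation_iff by blast
qed

lemma upper_type_imp_P_prop:
  assumes upper_type_below_alpha
  shows "\<exists>\<gamma>>1 / \<alpha>. P_prop \<sigma> \<gamma>"
proof -
  obtain \<gamma> M where \<gamma>: "0 < \<gamma>" "\<gamma> < \<alpha>" and H: "upper_type \<gamma> M"
    using assms unfolding upper_type_below_alpha_def by blast
  define \<gamma>' where "\<gamma>' = (\<gamma> + \<alpha>) / 2"
  have \<gamma>': "\<gamma> < \<gamma>'" "\<gamma>' < \<alpha>" unfolding \<gamma>'_def using \<gamma> by auto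
  obtain n :: nat where n: "n \<ge> 2" "M * real n powr \<gamma> < real n powr \<gamma>'"
    using exists_nat_powr_gap[OF \<gamma>(1) \<gamma>'(1), of M] H by (auto simp: upper_type_def)
  define K where "K = real n powr \<gamma>'"
  have K: "K > 1" and Kn: "K powr (1 / \<gamma>') = real n"
    unfolding K_def using n \<gamma> \<gamma>' by (simp_all add: powr_powr)
  have "\<forall>\<^sub>F t in at_top. ereal (\<sigma> (real n * t) / \<sigma> t) \<le> ereal (M * real n powr \<gamma>)"
    using eventually_ge_at_top[of a]
    by eventually_elim (use H n weight_pos in \<open>auto simp: upper_type_def divide_le_eq\<close>)
  hence "Limsup at_top (\<lambda>t. ereal (\<sigma> (K powr (1 / \<gamma>') * t) / \<sigma> t)) \<le> ereal (M * real n powr \<gamma>)"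
    unfolding Kn by (rule Limsup_bounded)
  also have "\<dots> < ereal K" using n unfolding K_def by simp
  finally have "P_prop \<sigma> (1 / \<gamma>')" unfolding P_prop_def using K by blast
  moreover have "1 / \<gamma>' > 1 / \<alpha>" using \<gamma> \<gamma>' by (simp add: frac_less2)
  ultimately show ?thesis by blast
qed

lemma gamma_index_iff_upper_type: "gamma_index \<sigma> > ereal (1 / \<alpha>) \<longleftrightarrow> upper_type_below_alpha"
  unfolding gamma_index_greater_iff[of "1 / \<alpha>" \<sigma>, simplified, OF alpha_pos]
  using P_prop_imp_eventual_dilation_bound eventual_dilation_bound_imp_upper_type
    upper_type_imp_P_prop by blast

lemma upper_matuszewska_imp_upper_type:
  assumes "upper_matuszewska \<sigma> < ereal \<alpha>"
  shows upper_type_below_alpha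
proof -
  from assms obtain \<beta> C where \<beta>: "\<beta> < \<alpha>" and C: "C > 0"
    and bound: "\<And>\<Lambda>. \<Lambda> > 1 \<Longrightarrow>
      Limsup at_top (\<lambda>x. SUP l\<in>{1..\<Lambda>}. ereal (\<sigma> (l * x) / (l powr \<beta> * \<sigma> x))) \<le> ereal C"
    unfolding upper_matuszewska_def Inf_less_iff by auto
  define \<beta>' where "\<beta>' = max \<beta> (\<alpha> / 2)"
  have \<beta>': "0 < \<beta>'" "\<beta>' < \<alpha>" "\<beta> \<le> \<beta>'" unfolding \<beta>'_def using \<beta> alpha_pos by auto
  obtain n :: nat where n: "n \<ge> 2" "(2 * C) * real n powr \<beta>' < real n powr \<alpha>"
    using exists_nat_powr_gap[OF \<beta>'(1,2), of "2 * C"] C by auto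
  have "Limsup at_top (\<lambda>x. SUP l\<in>{1..real n}. ereal (\<sigma> (l * x) / (l powr \<beta> * \<sigma> x))) < ereal (2 * C)"
    using bound[of "real n"] n C by (simp add: order.strict_trans1)
  hence "\<forall>\<^sub>F x in at_top. (SUP l\<in>{1..real n}. ereal (\<sigma> (l * x) / (l powr \<beta> * \<sigma> x))) < ereal (2 * C)"
    by (rule Limsup_lessD)
  hence "\<forall>\<^sub>F x in at_top. \<sigma> (real n * x) \<le> (2 * C * real n powr \<beta>') * \<sigma> x"
    using eventually_weight_pos
  proof eventually_elim
    case (elim x)
    have "ereal (\<sigma> (real n * x) / (real n powr \<beta> * \<sigma> x))
        \<le> (SUP l\<in>{1..real n}. ereal (\<sigma> (l * x) / (l powr \<beta> * \<sigma> x)))"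
      using n by (intro SUP_upper) auto
    from order.strict_trans1[OF this elim(1)]
    have "\<sigma> (real n * x) / (real n powr \<beta> * \<sigma> x) < 2 * C" by simp
    moreover have "real n powr \<beta> * \<sigma> x > 0" using elim n by simp
    ultimately have "\<sigma> (real n * x) < 2 * C * real n powr \<beta> * \<sigma> x"
      by (simp add: divide_less_eq algebra_simps)
    also have "\<dots> \<le> 2 * C * real n powr \<beta>' * \<sigma> x"
      using C \<beta>' n elim by (intro mult_right_mono mult_left_mono powr_mono) auto
    finally show ?case by simp
  qed
  moreover have "real n > 1" using n by simp
  ultimately have eventual_dilation_bound
    unfolding eventual_dilation_bound_def using n by blast
  thus upper_type_below_alpha by (rule eventual_dilation_bound_imp_upper_type)
qed

lemma upper_type_imp_upper_matuszewska:
  assumes upper_type_below_alpha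
  shows "upper_matuszewska \<sigma> < ereal \<alpha>"
proof -
  from assms obtain \<gamma> M where \<gamma>: "0 < \<gamma>" "\<gamma> < \<alpha>" and H: "upper_type \<gamma> M"
    unfolding upper_type_below_alpha_def by blast
  have "Limsup at_top (\<lambda>x. SUP l\<in>{1..\<Lambda>}. ereal (\<sigma> (l * x) / (l powr \<gamma> * \<sigma> x))) \<le> ereal M" for \<Lambda>
  proof (rule Limsup_bounded)
    show "\<forall>\<^sub>F x in at_top. (SUP l\<in>{1..\<Lambda>}. ereal (\<sigma> (l * x) / (l powr \<gamma> * \<sigma> x))) \<le> ereal M"
      using eventually_ge_at_top[of a]
    proof eventually_elim
      case (elim x)
      have "\<sigma> (l * x) / (l powr \<gamma> * \<sigma> x) \<le> M" if l: "l \<ge> 1" for l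
      proof -
        have "\<sigma> (l * x) \<le> M * l powr \<gamma> * \<sigma> x" using H elim l unfolding upper_type_def by blast
        thus ?thesis using weight_pos[OF elim] l by (simp add: divide_le_eq algebra_simps)
      qed
      thus ?case by (intro SUP_least) auto
    qed
  qed
  hence "ereal \<gamma> \<in> ereal ` {\<alpha>. \<exists>C\<alpha>>0. \<forall>\<Lambda>>1.
      Limsup at_top (\<lambda>x. SUP l\<in>{1..\<Lambda>}. ereal (\<sigma> (l * x) / (l powr \<alpha> * \<sigma> x))) \<le> ereal C\<alpha>}"
    using H unfolding upper_type_def by blast
  hence "upper_matuszewska \<sigma> \<le> ereal \<gamma>" unfolding upper_matuszewska_def by (rule Inf_lower)
  also have "\<dots> < ereal \<alpha>" using \<gamma> by simp
  finally show "upper_matuszewska \<sigma> < ereal \<alpha>" .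
qed

lemma upper_matuszewska_iff_upper_type: "upper_matuszewska \<sigma> < ereal \<alpha> \<longleftrightarrow> upper_type_below_alpha"
  using upper_matuszewska_imp_upper_type upper_type_imp_upper_matuszewska by blast

end

section \<open>The integral condition and its regularization\<close>

context unbounded_weight
begin

definition weight_ext :: "real \<Rightarrow> real" where
  "weight_ext x = \<sigma> (max 0 x)"

lemma weight_ext_measurable [measurable]: "weight_ext \<in> borel_measurable borel"
  unfolding weight_ext_def by (rule borel_measurable_mono_on_ext[OF mono])

lemma weight_ext_eq: "x \<ge> 0 \<Longrightarrow> weight_ext x = \<sigma> x"
  unfolding weight_ext_def by simp

definition dilation_integral :: "real \<Rightarrow> ennreal" where
  "dilation_integral y = (\<integral>\<^sup>+ t\<in>{1..}. ennreal (\<sigma> (y * t) / t powr (1 + \<alpha>)) \<partial>lborel)"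

lemma integral_condition_iff_dilation_integral:
  "integral_condition \<sigma> \<alpha> \<longleftrightarrow> (\<exists>C>0. \<forall>y>0. dilation_integral y \<le> ennreal (C * \<sigma> y + C))"
  unfolding integral_condition_def dilation_integral_def ..

lemma dilation_integral_ext:
  assumes "y \<ge> 0"
  shows "dilation_integral y
    = (\<integral>\<^sup>+ t. ennreal (weight_ext (y * t) / t powr (1 + \<alpha>)) * indicator {1..} t \<partial>lborel)"
  unfolding dilation_integral_def
  using assms by (intro nn_integral_cong) (auto simp: indicator_def weight_ext_eq)

lemma dilation_integral_mono:
  assumes "0 \<le> x" "x \<le> y"
  shows "dilation_integral x \<le> dilation_integral y"
  unfolding dilation_integral_def
proof (rule nn_integral_mono)
  fix t :: real
  show "ennreal (\<sigma> (x * t) / t powr (1 + \<alpha>)) * indicator {1..} t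
     \<le> ennreal (\<sigma> (y * t) / t powr (1 + \<alpha>)) * indicator {1..} t"
  proof (cases "t \<ge> 1")
    case True
    have "\<sigma> (x * t) \<le> \<sigma> (y * t)" using assms True by (intro weight_mono) (auto intro: mult_right_mono)
    thus ?thesis using True by (simp add: ennreal_leI divide_right_mono)
  qed simp
qed

lemma dilation_integral_lower:
  assumes y: "y \<ge> 0"
  shows "ennreal (\<sigma> y / \<alpha>) \<le> dilation_integral y"
proof -
  have "ennreal (\<sigma> y / \<alpha>) = ennreal (\<sigma> y) * (\<integral>\<^sup>+ t. ennreal (t powr (-1 - \<alpha>)) * indicator {1..} t \<partial>lborel)"
    using nn_integral_powr_tail[OF alpha_pos, of 1] weight_nonneg[OF y] alpha_pos
    by (simp add: ennreal_mult[symmetric] del: ennreal_mult')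
  also have "\<dots> = (\<integral>\<^sup>+ t. ennreal (\<sigma> y) * (ennreal (t powr (-1 - \<alpha>)) * indicator {1..} t) \<partial>lborel)"
    by (rule nn_integral_cmult[symmetric]) measurable
  also have "\<dots> \<le> dilation_integral y" unfolding dilation_integral_def
  proof (rule nn_integral_mono)
    fix t :: real
    show "ennreal (\<sigma> y) * (ennreal (t powr (-1 - \<alpha>)) * indicator {1..} t)
      \<le> ennreal (\<sigma> (y * t) / t powr (1 + \<alpha>)) * indicator {1..} t"
    proof (cases "t \<ge> 1")
      case True
      have "\<sigma> y \<le> \<sigma> (y * t)" using y True by (intro weight_mono) (auto simp: mult_le_cancel_left1)
      hence "\<sigma> y * t powr (-1 - \<alpha>) \<le> \<sigma> (y * t) / t powr (1 + \<alpha>)"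
        using True powr_minus_one_minus[of t \<alpha>] by (simp add: divide_right_mono)
      thus ?thesis using True weight_nonneg[OF y]
        by (simp add: ennreal_leI ennreal_mult[symmetric] del: ennreal_mult')
    qed simp
  qed
  finally show ?thesis .
qed

lemma dilation_integral_le_upper_type:
  assumes H: "upper_type \<gamma> M" and \<gamma>: "\<gamma> < \<alpha>" and y: "y \<ge> a"
  shows "dilation_integral y \<le> ennreal (M / (\<alpha> - \<gamma>) * \<sigma> y)"
proof -
  have M: "M > 0" using H unfolding upper_type_def by simp
  have "dilation_integral y
     \<le> (\<integral>\<^sup>+ t. ennreal (M * \<sigma> y) * (ennreal (t powr (-1 - (\<alpha> - \<gamma>))) * indicator {1..} t) \<partial>lborel)"
    unfolding dilation_integral_def
  proof (rule nn_integral_mono)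
    fix t :: real
    show "ennreal (\<sigma> (y * t) / t powr (1 + \<alpha>)) * indicator {1..} t
      \<le> ennreal (M * \<sigma> y) * (ennreal (t powr (-1 - (\<alpha> - \<gamma>))) * indicator {1..} t)"
    proof (cases "t \<ge> 1")
      case True
      have "\<sigma> (t * y) \<le> M * t powr \<gamma> * \<sigma> y"
        using H y True unfolding upper_type_def by blast
      hence "\<sigma> (y * t) \<le> M * t powr \<gamma> * \<sigma> y" by (simp only: mult.commute)
      hence "\<sigma> (y * t) / t powr (1 + \<alpha>) \<le> M * t powr \<gamma> * \<sigma> y / t powr (1 + \<alpha>)"
        using True by (intro divide_right_mono) auto
      also have "\<dots> = M * \<sigma> y * (t powr \<gamma> / t powr (1 + \<alpha>))" by simp
      also have "t powr \<gamma> / t powr (1 + \<alpha>) = t powr (-1 - (\<alpha> - \<gamma>))"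
        by (simp add: powr_diff[symmetric] algebra_simps)
      finally show ?thesis using True M weight_pos[OF y]
        by (simp add: ennreal_leI ennreal_mult[symmetric] del: ennreal_mult')
    qed simp
  qed
  also have "\<dots> = ennreal (M * \<sigma> y) * (\<integral>\<^sup>+ t. ennreal (t powr (-1 - (\<alpha> - \<gamma>))) * indicator {1..} t \<partial>lborel)"
    by (rule nn_integral_cmult) measurable
  also have "\<dots> = ennreal (M * \<sigma> y) * ennreal (1 / (\<alpha> - \<gamma>))"
    using nn_integral_powr_tail[of "\<alpha> - \<gamma>" 1] \<gamma> by simp
  also have "\<dots> = ennreal (M / (\<alpha> - \<gamma>) * \<sigma> y)"
    using \<gamma> M weight_pos[OF y] by (simp add: ennreal_mult[symmetric] del: ennreal_mult')
  finally show ?thesis .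
qed

lemma upper_type_imp_integral_condition:
  assumes upper_type_below_alpha
  shows "integral_condition \<sigma> \<alpha>"
proof -
  obtain \<gamma> M where \<gamma>: "0 < \<gamma>" "\<gamma> < \<alpha>" and H: "upper_type \<gamma> M"
    using assms unfolding upper_type_below_alpha_def by blast
  have M: "M > 0" using H unfolding upper_type_def by simp
  note big = dilation_integral_le_upper_type[OF H \<gamma>(2)]
  define C where "C = M / (\<alpha> - \<gamma>) * (1 + \<sigma> a)"
  have \<sigma>a: "\<sigma> a > 0" using weight_pos by simp
  have C: "C > 0" unfolding C_def using \<gamma> M \<sigma>a by simp
  have Mg: "M / (\<alpha> - \<gamma>) > 0" using \<gamma> M by simp
  hence "M / (\<alpha> - \<gamma>) * 1 \<le> M / (\<alpha> - \<gamma>) * (1 + \<sigma> a)" using \<sigma>a by (intro mult_left_mono) auto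
  hence MC: "M / (\<alpha> - \<gamma>) \<le> C" unfolding C_def by simp
  have "dilation_integral y \<le> ennreal (C * \<sigma> y + C)" if y: "y > 0" for y
  proof (cases "y \<ge> a")
    case True
    have "M / (\<alpha> - \<gamma>) * \<sigma> y \<le> C * \<sigma> y"
      using MC weight_pos[OF True] by (intro mult_right_mono) auto
    thus ?thesis using big[OF True] C weight_pos[OF True] by (meson ennreal_leI order.trans add_increasing2 less_imp_le)
  next
    case False
    have "dilation_integral y \<le> dilation_integral a" using False y by (intro dilation_integral_mono) auto
    also have "\<dots> \<le> ennreal (M / (\<alpha> - \<gamma>) * \<sigma> a)" using big by simp
    also have "\<dots> \<le> ennreal (C * \<sigma> y + C)"
    proof (rule ennreal_leI)
      have "M / (\<alpha> - \<gamma>) * \<sigma> a \<le> C" unfolding C_def using Mg by (simp add: distrib_left)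
      moreover have "C * \<sigma> y \<ge> 0" using C weight_nonneg[of y] y by simp
      ultimately show "M / (\<alpha> - \<gamma>) * \<sigma> a \<le> C * \<sigma> y + C" by linarith
    qed
    finally show ?thesis .
  qed
  thus ?thesis unfolding integral_condition_iff_dilation_integral using C by blast
qed

definition tail_integral :: "real \<Rightarrow> ennreal" where
  "tail_integral y = (\<integral>\<^sup>+ s. ennreal (weight_ext s / s powr (1 + \<alpha>)) * indicator {y..} s \<partial>lborel)"

lemma tail_integral_eq:
  assumes y: "y > 0"
  shows "tail_integral y = ennreal (y powr (-\<alpha>)) * dilation_integral y"
proof -
  define g where "g = (\<lambda>s. ennreal (weight_ext s / s powr (1 + \<alpha>)) * indicator {y..} s)"
  have [measurable]: "g \<in> borel_measurable borel" unfolding g_def by measurable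
  have "tail_integral y = ennreal y * (\<integral>\<^sup>+ u. g (y * u) \<partial>lborel)"
    unfolding tail_integral_def g_def[symmetric]
    using nn_integral_real_affine[of g y 0] y by simp
  also have "\<dots> = (\<integral>\<^sup>+ u. ennreal y * g (y * u) \<partial>lborel)"
    by (rule nn_integral_cmult[symmetric]) (simp add: g_def)
  also have "\<dots> = (\<integral>\<^sup>+ u. ennreal (y powr (-\<alpha>)) *
      (ennreal (weight_ext (y * u) / u powr (1 + \<alpha>)) * indicator {1..} u) \<partial>lborel)"
  proof (intro nn_integral_cong)
    fix u :: real
    show "ennreal y * g (y * u)
      = ennreal (y powr (-\<alpha>)) * (ennreal (weight_ext (y * u) / u powr (1 + \<alpha>)) * indicator {1..} u)"
    proof (cases "u \<ge> 1")
      case True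
      have "(y * u) powr (1 + \<alpha>) = y * (y powr \<alpha> * u powr (1 + \<alpha>))"
        using y True by (simp add: powr_mult powr_add)
      hence "y * (weight_ext (y * u) / (y * u) powr (1 + \<alpha>))
          = y powr (-\<alpha>) * (weight_ext (y * u) / u powr (1 + \<alpha>))"
        using y True by (simp add: powr_minus_divide field_simps)
      moreover have "weight_ext (y * u) \<ge> 0" using y True by (simp add: weight_ext_eq weight_nonneg)
      ultimately show ?thesis unfolding g_def using True y
        by (simp add: ennreal_mult[symmetric] mult_le_cancel_left1 del: ennreal_mult')
    next
      case False
      thus ?thesis unfolding g_def using y by simp
    qed
  qed
  also have "\<dots> = ennreal (y powr (-\<alpha>)) * dilation_integral y"
    using y by (subst nn_integral_cmult) (measurable, simp add: dilation_integral_ext)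
  finally show ?thesis .
qed

lemma tail_integral_split:
  assumes y: "0 < y" and yx: "y \<le> x"
  shows "\<exists>A B. tail_integral y = A + tail_integral x \<and> ennreal (\<sigma> y) * B \<le> A \<and> A \<le> ennreal (\<sigma> x) * B
     \<and> ennreal (y powr (-\<alpha>) / \<alpha>) = B + ennreal (x powr (-\<alpha>) / \<alpha>)"
proof -
  define A where "A = (\<integral>\<^sup>+ s. ennreal (weight_ext s / s powr (1 + \<alpha>)) * indicator {y..<x} s \<partial>lborel)"
  define B where "B = (\<integral>\<^sup>+ s. ennreal (s powr (-1 - \<alpha>)) * indicator {y..<x} s \<partial>lborel)"
  have "tail_integral y = A + tail_integral x"
    unfolding tail_integral_def A_def by (rule nn_integral_split_at) (measurable, rule yx)
  moreover have "ennreal (y powr (-\<alpha>) / \<alpha>) = B + ennreal (x powr (-\<alpha>) / \<alpha>)"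
    using nn_integral_split_at[of "\<lambda>s. ennreal (s powr (-1 - \<alpha>))", OF _ yx]
      nn_integral_powr_tail[OF alpha_pos, of x] nn_integral_powr_tail[OF alpha_pos, of y] y yx
    unfolding B_def by simp
  moreover have "ennreal (\<sigma> y) * B \<le> A"
    unfolding B_def A_def
  proof (subst nn_integral_cmult[symmetric], measurable, rule nn_integral_mono)
    fix s :: real
    show "ennreal (\<sigma> y) * (ennreal (s powr (-1 - \<alpha>)) * indicator {y..<x} s)
      \<le> ennreal (weight_ext s / s powr (1 + \<alpha>)) * indicator {y..<x} s"
    proof (cases "s \<in> {y..<x}")
      case True
      hence s: "y \<le> s" "s > 0" using y by auto
      have "\<sigma> y \<le> weight_ext s" using s y by (simp add: weight_ext_eq weight_mono)
      hence "\<sigma> y * s powr (-1 - \<alpha>) \<le> weight_ext s / s powr (1 + \<alpha>)"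
        using powr_minus_one_minus[OF s(2), of \<alpha>] by (simp add: divide_right_mono)
      thus ?thesis using True weight_nonneg[of y] y
        by (simp add: ennreal_leI ennreal_mult[symmetric] del: ennreal_mult')
    qed simp
  qed
  moreover have "A \<le> ennreal (\<sigma> x) * B"
    unfolding B_def A_def
  proof (subst nn_integral_cmult[symmetric], measurable, rule nn_integral_mono)
    fix s :: real
    show "ennreal (weight_ext s / s powr (1 + \<alpha>)) * indicator {y..<x} s
      \<le> ennreal (\<sigma> x) * (ennreal (s powr (-1 - \<alpha>)) * indicator {y..<x} s)"
    proof (cases "s \<in> {y..<x}")
      case True
      hence s: "s < x" "s > 0" using y by auto
      have "weight_ext s \<le> \<sigma> x" using s by (simp add: weight_ext_eq weight_mono)
      hence "weight_ext s / s powr (1 + \<alpha>) \<le> \<sigma> x * s powr (-1 - \<alpha>)"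
        using powr_minus_one_minus[OF s(2), of \<alpha>] by (simp add: divide_right_mono)
      thus ?thesis using True weight_nonneg[of x] y yx
        by (simp add: ennreal_leI ennreal_mult[symmetric] del: ennreal_mult')
    qed simp
  qed
  ultimately show ?thesis by blast
qed

definition dilation_integral_real :: "real \<Rightarrow> real" where
  "dilation_integral_real y = enn2real (dilation_integral y)"

lemma dilation_integral_real_nonneg: "dilation_integral_real y \<ge> 0"
  unfolding dilation_integral_real_def by simp

text \<open>For \<open>y > 0\<close> this is \<open>y\<^sup>\<alpha> / \<alpha> \<integral>\<^sub>y\<^sup>\<infinity> \<sigma>(s) s\<^sup>-\<^sup>1\<^sup>-\<^sup>\<alpha> ds\<close> (lemma tail_integral_eq).\<close>
definition regularization :: "real \<Rightarrow> real" where
  "regularization y = (if y \<le> 0 then \<sigma> 0 / \<alpha>\<^sup>2 else dilation_integral_real y / \<alpha>)"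

lemma regularization_nonneg: "regularization y \<ge> 0"
  unfolding regularization_def using weight_nonneg[of 0] dilation_integral_real_nonneg alpha_pos by simp

lemma regularization_zero: "regularization 0 = \<sigma> 0 / \<alpha>\<^sup>2"
  unfolding regularization_def by simp

context
  assumes icond: "integral_condition \<sigma> \<alpha>"
begin

lemma dilation_integral_real_upper: "\<exists>C>0. \<forall>y>0. dilation_integral_real y \<le> C * \<sigma> y + C"
proof -
  obtain C where C: "C > 0" "\<And>y. y > 0 \<Longrightarrow> dilation_integral y \<le> ennreal (C * \<sigma> y + C)"
    using icond unfolding integral_condition_iff_dilation_integral by blast
  have "dilation_integral_real y \<le> C * \<sigma> y + C" if "y > 0" for y
    using C(2)[OF that] C(1) weight_nonneg[of y] that unfolding dilation_integral_real_def
    by (simp add: enn2real_leI)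
  thus ?thesis using C(1) by blast
qed

lemma dilation_integral_eq_real:
  assumes "y > 0"
  shows "dilation_integral y = ennreal (dilation_integral_real y)"
proof -
  obtain C where "C > 0" "\<forall>y>0. dilation_integral y \<le> ennreal (C * \<sigma> y + C)"
    using icond unfolding integral_condition_iff_dilation_integral by blast
  hence "dilation_integral y < top" using assms by (metis ennreal_less_top order_le_less_trans)
  thus ?thesis unfolding dilation_integral_real_def by simp
qed

lemma dilation_integral_real_lower: "y > 0 \<Longrightarrow> \<sigma> y / \<alpha> \<le> dilation_integral_real y"
  using dilation_integral_lower[of y] dilation_integral_eq_real[of y] dilation_integral_real_nonneg
  by (simp add: ennreal_le_iff)

lemma dilation_integral_real_mono: "0 < x \<Longrightarrow> x \<le> y \<Longrightarrow> dilation_integral_real x \<le> dilation_integral_real y"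
  using dilation_integral_mono[of x y] dilation_integral_eq_real[of x] dilation_integral_eq_real[of y]
    dilation_integral_real_nonneg by (simp add: ennreal_le_iff)

text \<open>Since \<open>y\<^sup>-\<^sup>\<alpha> \<cdot> dilation_integral_real y = \<integral>\<^sub>y\<^sup>\<infinity> \<sigma>(s) s\<^sup>-\<^sup>1\<^sup>-\<^sup>\<alpha> ds\<close>, its decrements are
  pinched between the values of \<open>\<sigma>\<close> at the end points.\<close>
lemma dilation_integral_real_decrement:
  assumes y: "0 < y" and yx: "y \<le> x"
  defines "d \<equiv> y powr (-\<alpha>) * dilation_integral_real y - x powr (-\<alpha>) * dilation_integral_real x"
  shows "\<sigma> y * ((y powr (-\<alpha>) - x powr (-\<alpha>)) / \<alpha>) \<le> d"
    and "d \<le> \<sigma> x * ((y powr (-\<alpha>) - x powr (-\<alpha>)) / \<alpha>)"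
proof -
  have x: "x > 0" using y yx by simp
  obtain A B where AB: "tail_integral y = A + tail_integral x" "ennreal (\<sigma> y) * B \<le> A"
     "A \<le> ennreal (\<sigma> x) * B" "ennreal (y powr (-\<alpha>) / \<alpha>) = B + ennreal (x powr (-\<alpha>) / \<alpha>)"
    using tail_integral_split[OF y yx] by blast
  have tail: "tail_integral z = ennreal (z powr (-\<alpha>) * dilation_integral_real z)" if "z > 0" for z
    using tail_integral_eq[OF that] dilation_integral_eq_real[OF that] dilation_integral_real_nonneg
    by (simp add: ennreal_mult)
  have "B < top" using AB(4) by (metis ennreal_less_top le_iff_add order_le_less_trans)
  then obtain b where b: "B = ennreal b" "b \<ge> 0" by (cases B) auto
  have "y powr (-\<alpha>) / \<alpha> = b + x powr (-\<alpha>) / \<alpha>"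
    using AB(4) b alpha_pos by (simp add: ennreal_plus[symmetric] del: ennreal_plus)
  hence beq: "b = (y powr (-\<alpha>) - x powr (-\<alpha>)) / \<alpha>" by (simp add: diff_divide_distrib)
  have "A < top" using AB(1) tail[OF y] by (metis ennreal_less_top le_iff_add order_le_less_trans)
  then obtain r where r: "A = ennreal r" "r \<ge> 0" by (cases A) auto
  have "y powr (-\<alpha>) * dilation_integral_real y = r + x powr (-\<alpha>) * dilation_integral_real x"
    using AB(1) tail[OF y] tail[OF x] r dilation_integral_real_nonneg
    by (simp add: ennreal_plus[symmetric] del: ennreal_plus)
  hence dr: "d = r" unfolding d_def by simp
  have "ennreal (\<sigma> y * b) \<le> ennreal r" "ennreal r \<le> ennreal (\<sigma> x * b)"
    using AB(2,3) r b weight_nonneg[of y] weight_nonneg[of x] y x by (simp_all add: ennreal_mult)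
  hence "\<sigma> y * b \<le> r" "r \<le> \<sigma> x * b"
    using r(2) mult_nonneg_nonneg[OF weight_nonneg[of x] b(2)] x by (simp_all add: ennreal_le_iff)
  thus "\<sigma> y * ((y powr (-\<alpha>) - x powr (-\<alpha>)) / \<alpha>) \<le> d"
    and "d \<le> \<sigma> x * ((y powr (-\<alpha>) - x powr (-\<alpha>)) / \<alpha>)" using beq dr by simp_all
qed

lemma dilation_integral_real_tangent:
  assumes x: "x > 0" and y: "y > 0"
  shows "dilation_integral_real y
    \<le> (y / x) powr \<alpha> * dilation_integral_real x + \<sigma> x / \<alpha> * (1 - (y / x) powr \<alpha>)"
proof -
  define p q where "p = y powr \<alpha>" and "q = x powr \<alpha>"
  have pq: "p > 0" "q > 0" unfolding p_def q_def using x y by auto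
  have inv: "y powr (-\<alpha>) = 1 / p" "x powr (-\<alpha>) = 1 / q" "(y / x) powr \<alpha> = p / q"
    unfolding p_def q_def using x y by (simp_all add: powr_minus_divide powr_divide)
  note J = dilation_integral_real_nonneg
  show ?thesis
  proof (cases "y \<le> x")
    case True
    have "1 / p * dilation_integral_real y - 1 / q * dilation_integral_real x \<le> \<sigma> x * ((1 / p - 1 / q) / \<alpha>)"
      using dilation_integral_real_decrement(2)[OF y True] unfolding inv .
    hence "p * (1 / p * dilation_integral_real y - 1 / q * dilation_integral_real x)
        \<le> p * (\<sigma> x * ((1 / p - 1 / q) / \<alpha>))" using pq by (intro mult_left_mono) auto
    moreover have "p * (1 / p * dilation_integral_real y - 1 / q * dilation_integral_real x)
        = dilation_integral_real y - p / q * dilation_integral_real x"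
      "p * (\<sigma> x * ((1 / p - 1 / q) / \<alpha>)) = \<sigma> x / \<alpha> * (1 - p / q)"
      using pq alpha_pos by (simp_all add: field_simps)
    ultimately show ?thesis unfolding inv by linarith
  next
    case False
    have "\<sigma> x * ((1 / q - 1 / p) / \<alpha>) \<le> 1 / q * dilation_integral_real x - 1 / p * dilation_integral_real y"
      using dilation_integral_real_decrement(1)[OF x, of y] False unfolding inv by simp
    hence "p * (\<sigma> x * ((1 / q - 1 / p) / \<alpha>))
        \<le> p * (1 / q * dilation_integral_real x - 1 / p * dilation_integral_real y)"
      using pq by (intro mult_left_mono) auto
    moreover have "p * (1 / q * dilation_integral_real x - 1 / p * dilation_integral_real y)
        = p / q * dilation_integral_real x - dilation_integral_real y"
      "p * (\<sigma> x * ((1 / q - 1 / p) / \<alpha>)) = - (\<sigma> x / \<alpha> * (1 - p / q))"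
      using pq alpha_pos by (simp_all add: field_simps)
    ultimately show ?thesis unfolding inv by linarith
  qed
qed

lemma integral_condition_imp_eventual_dilation_bound: eventual_dilation_bound
proof -
  define J where "J = dilation_integral_real"
  obtain C where C: "C > 0" and JC: "\<And>y. y > 0 \<Longrightarrow> J y \<le> C * \<sigma> y + C"
    using dilation_integral_real_upper unfolding J_def by blast
  obtain T0 where T0: "\<And>y. y \<ge> T0 \<Longrightarrow> \<sigma> y \<ge> 1"
    using lim unfolding filterlim_at_top eventually_at_top_linorder by blast
  define T where "T = max (max T0 a) 1"
  have T: "T > 0" unfolding T_def by auto
  have yT: "y > 0" "\<sigma> y \<ge> 1" "y \<ge> a" if "y \<ge> T" for y using that T0[of y] unfolding T_def by auto
  have ratio: "\<sigma> y / y powr \<alpha> = y powr (-\<alpha>) * \<sigma> y" for y by (simp add: powr_minus_divide)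
  define c where "c = (1 - 2 powr (-\<alpha>)) / \<alpha>"
  have "\<exists>n>0. \<exists>\<theta><1. \<forall>y\<in>{T..}. \<sigma> (2 ^ n * y) / (2 ^ n * y) powr \<alpha> \<le> \<theta> * (\<sigma> y / y powr \<alpha>)"
  proof (rule tail_doubling_contraction[where \<phi> = "\<lambda>y. y powr (-\<alpha>) * J y" and B = "max \<alpha> (2 * C)" and c = c])
    fix y assume "y \<in> {T..}"
    hence y: "y \<ge> T" by simp
    show "2 * y \<in> {T..}" using yT[OF y] y by simp
    show "0 \<le> y powr (-\<alpha>) * J y" unfolding J_def by (simp add: dilation_integral_real_nonneg)
    have "\<sigma> y \<le> \<alpha> * J y"
      using dilation_integral_real_lower[OF yT(1)[OF y]] alpha_pos unfolding J_def by (simp add: field_simps)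
    hence "y powr (-\<alpha>) * \<sigma> y \<le> y powr (-\<alpha>) * (\<alpha> * J y)" by (intro mult_left_mono) auto
    hence "\<sigma> y / y powr \<alpha> \<le> \<alpha> * (y powr (-\<alpha>) * J y)" unfolding ratio by (simp add: ac_simps)
    also have "\<dots> \<le> max \<alpha> (2 * C) * (y powr (-\<alpha>) * J y)"
      unfolding J_def using dilation_integral_real_nonneg by (intro mult_right_mono) auto
    finally show "\<sigma> y / y powr \<alpha> \<le> max \<alpha> (2 * C) * (y powr (-\<alpha>) * J y)" .
    have "C * 1 \<le> C * \<sigma> y" using yT[OF y] C by (intro mult_left_mono) auto
    hence "J y \<le> 2 * C * \<sigma> y" using JC[of y] yT[OF y] by simp
    hence "y powr (-\<alpha>) * J y \<le> y powr (-\<alpha>) * (2 * C * \<sigma> y)" by (intro mult_left_mono) auto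
    hence "y powr (-\<alpha>) * J y \<le> 2 * C * (\<sigma> y / y powr \<alpha>)" unfolding ratio by (simp add: ac_simps)
    also have "\<dots> \<le> max \<alpha> (2 * C) * (\<sigma> y / y powr \<alpha>)" using yT[OF y] by (intro mult_right_mono) auto
    finally show "y powr (-\<alpha>) * J y \<le> max \<alpha> (2 * C) * (\<sigma> y / y powr \<alpha>)" .
    have "(2 * y) powr (-\<alpha>) = 2 powr (-\<alpha>) * y powr (-\<alpha>)" using yT[OF y] by (simp add: powr_mult)
    thus "(2 * y) powr (-\<alpha>) * J (2 * y) + c * (\<sigma> y / y powr \<alpha>) \<le> y powr (-\<alpha>) * J y"
      using dilation_integral_real_decrement(1)[of y "2 * y"] yT[OF y]
      unfolding J_def c_def ratio by (simp add: algebra_simps)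
  qed (use C alpha_pos in \<open>auto simp: c_def powr_minus_divide\<close>)
  thus ?thesis by (rule eventual_dilation_boundI[OF T])
qed

lemma weight_le_regularization:
  assumes "y \<ge> 0"
  shows "\<sigma> y \<le> \<alpha>\<^sup>2 * regularization y"
proof (cases "y = 0")
  case False
  hence "y > 0" using assms by simp
  thus ?thesis using dilation_integral_real_lower[OF \<open>y > 0\<close>] alpha_pos
    unfolding regularization_def by (simp add: field_simps power2_eq_square)
qed (use alpha_pos in \<open>simp add: regularization_def\<close>)

lemma regularization_mono: "mono_on {0..} regularization"
proof (rule mono_onI)
  fix x y :: real assume "x \<in> {0..}" "y \<in> {0..}" "x \<le> y"
  hence xy: "0 \<le> x" "x \<le> y" by auto
  show "regularization x \<le> regularization y"
  proof (cases "x = 0")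
    case True
    have "\<sigma> 0 \<le> \<alpha>\<^sup>2 * regularization y"
      using weight_mono[of 0 y] weight_le_regularization[of y] xy by simp
    thus ?thesis using True alpha_pos by (simp add: regularization_def field_simps)
  next
    case False
    thus ?thesis using dilation_integral_real_mono[of x y] xy alpha_pos
      by (simp add: regularization_def divide_right_mono)
  qed
qed

lemma regularization_sim: "sim_on {0..} \<sigma> regularization"
proof -
  obtain C where C: "C > 0" and JC: "\<And>y. y > 0 \<Longrightarrow> dilation_integral_real y \<le> C * \<sigma> y + C"
    using dilation_integral_real_upper by blast
  define C0 where "C0 = max (max 1 (\<alpha>\<^sup>2)) (max (C / \<alpha>) (1 / \<alpha>\<^sup>2))"
  have C0: "C0 \<ge> 1" "C0 \<ge> \<alpha>\<^sup>2" "C0 \<ge> C / \<alpha>" "C0 \<ge> 1 / \<alpha>\<^sup>2" unfolding C0_def by auto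
  have "regularization t / C0 - C0 \<le> \<sigma> t \<and> \<sigma> t \<le> C0 * regularization t + C0" if t: "t \<ge> 0" for t
  proof
    have "\<sigma> t \<le> \<alpha>\<^sup>2 * regularization t" by (rule weight_le_regularization[OF t])
    also have "\<dots> \<le> C0 * regularization t" using C0 regularization_nonneg by (intro mult_right_mono) auto
    finally show "\<sigma> t \<le> C0 * regularization t + C0" using C0 by linarith
    show "regularization t / C0 - C0 \<le> \<sigma> t"
    proof (cases "t = 0")
      case True
      have "\<alpha>\<^sup>2 * (1 / \<alpha>\<^sup>2) \<le> \<alpha>\<^sup>2 * C0" using C0 by (intro mult_left_mono) auto
      hence "1 \<le> \<alpha>\<^sup>2 * C0" using alpha_pos by simp
      hence "\<sigma> 0 / (\<alpha>\<^sup>2 * C0) \<le> \<sigma> 0"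
        using weight_nonneg[of 0] by (simp add: divide_le_eq mult_le_cancel_left1)
      thus ?thesis using True C0 by (simp add: regularization_zero)
    next
      case False
      hence "t > 0" using t by simp
      hence "regularization t \<le> (C * \<sigma> t + C) / \<alpha>"
        using JC alpha_pos unfolding regularization_def by (simp add: divide_right_mono)
      hence "regularization t / (C / \<alpha>) \<le> (C * \<sigma> t + C) / \<alpha> / (C / \<alpha>)"
        using C alpha_pos by (intro divide_right_mono) auto
      moreover have "regularization t / C0 \<le> regularization t / (C / \<alpha>)"
        using C0 regularization_nonneg C alpha_pos by (intro divide_left_mono) auto
      ultimately have "regularization t / C0 \<le> (C * \<sigma> t + C) / \<alpha> / (C / \<alpha>)" by linarith
      also have "\<dots> = \<sigma> t + 1" using C alpha_pos by (simp add: field_simps)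
      finally show ?thesis using C0 by linarith
    qed
  qed
  thus ?thesis unfolding sim_on_def using C0(1) by blast
qed

text \<open>This is dilation_integral_real_tangent after the substitution \<open>u = y\<^sup>\<alpha>\<close>.\<close>
lemma regularization_supporting_line:
  assumes w: "w > 0" and u: "u \<ge> 0"
  defines "g \<equiv> \<lambda>u. regularization (u powr (1 / \<alpha>))"
  shows "g u \<le> g w + (g w - \<sigma> (w powr (1 / \<alpha>)) / \<alpha>\<^sup>2) / w * (u - w)"
proof -
  define x where "x = w powr (1 / \<alpha>)"
  define c where "c = \<sigma> x / \<alpha>\<^sup>2"
  have x: "x > 0" unfolding x_def using w by simp
  have gw: "g w = dilation_integral_real x / \<alpha>" unfolding g_def x_def[symmetric] regularization_def using x by simp
  have "g u \<le> (u / w) * g w + c * (1 - u / w)"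
  proof (cases "u = 0")
    case True
    have "\<sigma> 0 \<le> \<sigma> x" using x by (intro weight_mono) auto
    thus ?thesis using True alpha_pos unfolding g_def c_def by (simp add: regularization_zero divide_right_mono)
  next
    case False
    define y where "y = u powr (1 / \<alpha>)"
    have y: "y > 0" unfolding y_def using False u by simp
    have gu: "g u = dilation_integral_real y / \<alpha>" unfolding g_def y_def[symmetric] regularization_def using y by simp
    have r: "(y / x) powr \<alpha> = u / w"
      unfolding x_def y_def using False u w alpha_pos by (simp add: powr_divide[symmetric] powr_powr)
    have "dilation_integral_real y / \<alpha>
        \<le> ((u / w) * dilation_integral_real x + \<sigma> x / \<alpha> * (1 - u / w)) / \<alpha>"
      using dilation_integral_real_tangent[OF x y] alpha_pos unfolding r by (simp add: divide_right_mono)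
    thus ?thesis unfolding gu gw c_def using alpha_pos by (simp add: field_simps power2_eq_square)
  qed
  also have "\<dots> = g w + (g w - c) / w * (u - w)" using w by (simp add: field_simps)
  finally show ?thesis unfolding c_def x_def .
qed

lemma regularization_concave: "concave_on {0..} (\<lambda>t. regularization (t powr (1 / \<alpha>)))"
  using regularization_supporting_line
  by (intro concave_on_nonneg_reals_if_supporting_lines) blast

lemma integral_condition_imp_regularization:
  "\<exists>\<kappa> :: real \<Rightarrow> real. mono_on {0..} \<kappa> \<and> (\<forall>t\<ge>0. \<kappa> t \<ge> 0) \<and>
     sim_on {0..} \<sigma> \<kappa> \<and> \<kappa> 0 = \<sigma> 0 / \<alpha>\<^sup>2 \<and> integral_condition \<kappa> \<alpha> \<and>
     concave_on {0..} (\<lambda>t. \<kappa> (t powr (1 / \<alpha>)))"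
proof (intro exI conjI)
  have "sim_on {0..} regularization \<sigma>" using sim_on_sym[OF regularization_sim] nonneg by auto
  thus "integral_condition regularization \<alpha>"
    using integral_condition_transfer[OF mono nonneg _ _ icond alpha_pos] regularization_nonneg by blast
qed (use regularization_mono regularization_nonneg regularization_sim regularization_zero
      regularization_concave in auto)

end

lemma integral_condition_iff_upper_type: "integral_condition \<sigma> \<alpha> \<longleftrightarrow> upper_type_below_alpha"
  using integral_condition_imp_eventual_dilation_bound eventual_dilation_bound_imp_upper_type
    upper_type_imp_integral_condition by blast

lemma regularization_iff_integral_condition:
  "(\<exists>\<kappa> :: real \<Rightarrow> real. mono_on {0..} \<kappa> \<and> (\<forall>t\<ge>0. \<kappa> t \<ge> 0) \<and>
     sim_on {0..} \<sigma> \<kappa> \<and> \<kappa> 0 = \<sigma> 0 / \<alpha>\<^sup>2 \<and> integral_condition \<kappa> \<alpha> \<and>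
     concave_on {0..} (\<lambda>t. \<kappa> (t powr (1 / \<alpha>)))) \<longleftrightarrow> integral_condition \<sigma> \<alpha>"
  using integral_condition_imp_regularization integral_condition_transfer nonneg alpha_pos by blast

end

section \<open>Integral and series conditions\<close>

context unbounded_weight
begin

lemma reciprocal_integral_le_upper_type:
  assumes H: "upper_type \<gamma> M" and \<gamma>: "\<gamma> < \<alpha>" and y: "y \<ge> a"
  shows "(\<integral>\<^sup>+ t\<in>{a..y}. ennreal (t powr \<alpha> / \<sigma> t / t) \<partial>lborel) \<le> ennreal (M / (\<alpha> - \<gamma>) * y powr \<alpha> / \<sigma> y)"
proof -
  have M: "M > 0" using H unfolding upper_type_def by simp
  have \<sigma>y: "\<sigma> y > 0" using weight_pos[OF y] .
  have y0: "y \<ge> 0" using y a_nonneg by simp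
  define c where "c = M * y powr \<gamma> / \<sigma> y"
  have c: "c \<ge> 0" unfolding c_def using M \<sigma>y by simp
  have "(\<integral>\<^sup>+ t\<in>{a..y}. ennreal (t powr \<alpha> / \<sigma> t / t) \<partial>lborel)
      \<le> (\<integral>\<^sup>+ t. ennreal c * (ennreal (t powr ((\<alpha> - \<gamma>) - 1)) * indicator {0..y} t) \<partial>lborel)"
  proof (rule nn_integral_mono)
    fix t :: real
    show "ennreal (t powr \<alpha> / \<sigma> t / t) * indicator {a..y} t
      \<le> ennreal c * (ennreal (t powr ((\<alpha> - \<gamma>) - 1)) * indicator {0..y} t)"
    proof (cases "t \<in> {a..y} \<and> t > 0")
      case True
      hence t: "a \<le> t" "t \<le> y" "t > 0" by auto
      have \<sigma>t: "\<sigma> t > 0" using weight_pos t by auto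
      have "\<sigma> y \<le> M * (y / t) powr \<gamma> * \<sigma> t" by (rule upper_typeD[OF H t(1,3,2)])
      hence "1 / \<sigma> t \<le> M * (y / t) powr \<gamma> / \<sigma> y" using \<sigma>t \<sigma>y by (simp add: field_simps)
      hence "t powr (\<alpha> - 1) * (1 / \<sigma> t) \<le> t powr (\<alpha> - 1) * (M * (y / t) powr \<gamma> / \<sigma> y)"
        by (intro mult_left_mono) auto
      also have "t powr (\<alpha> - 1) * (M * (y / t) powr \<gamma> / \<sigma> y) = c * t powr ((\<alpha> - \<gamma>) - 1)"
      proof -
        have "(y / t) powr \<gamma> = y powr \<gamma> / t powr \<gamma>" using t y0 by (simp add: powr_divide)
        moreover have "t powr ((\<alpha> - \<gamma>) - 1) = t powr (\<alpha> - 1) / t powr \<gamma>"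
          by (simp add: powr_diff[symmetric] algebra_simps)
        ultimately show ?thesis unfolding c_def by (simp add: field_simps)
      qed
      also have "t powr (\<alpha> - 1) * (1 / \<sigma> t) = t powr \<alpha> / \<sigma> t / t" using t by (simp add: powr_diff)
      finally show ?thesis using True c
        by (simp add: ennreal_leI ennreal_mult[symmetric] del: ennreal_mult')
    next
      case False
      hence "t \<notin> {a..y} \<or> t = 0" using a_nonneg by auto
      thus ?thesis by auto
    qed
  qed
  also have "\<dots> = ennreal c * ennreal (y powr (\<alpha> - \<gamma>) / (\<alpha> - \<gamma>))"
    using \<gamma> y0 by (subst nn_integral_cmult) (measurable, simp add: nn_integral_powr_from_0)
  also have "\<dots> = ennreal (M / (\<alpha> - \<gamma>) * y powr \<alpha> / \<sigma> y)"
    using c \<gamma> unfolding c_def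
    by (simp add: ennreal_mult[symmetric] powr_add[symmetric] field_simps del: ennreal_mult')
  finally show ?thesis .
qed

lemma upper_type_imp_reciprocal_integral:
  assumes upper_type_below_alpha
  shows "\<exists>C>0. \<forall>y\<ge>a. (\<integral>\<^sup>+ t\<in>{a..y}. ennreal (t powr \<alpha> / \<sigma> t / t) \<partial>lborel)
                       \<le> ennreal (C * y powr \<alpha> / \<sigma> y)"
proof -
  obtain \<gamma> M where \<gamma>: "\<gamma> < \<alpha>" and H: "upper_type \<gamma> M"
    using assms unfolding upper_type_below_alpha_def by blast
  moreover have "M / (\<alpha> - \<gamma>) > 0" using H \<gamma> unfolding upper_type_def by simp
  ultimately show ?thesis using reciprocal_integral_le_upper_type by blast
qed

definition reciprocal_integral :: "real set \<Rightarrow> ennreal" where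
  "reciprocal_integral A = (\<integral>\<^sup>+ t. ennreal (t powr \<alpha> / weight_ext t / t) * indicator A t \<partial>lborel)"

lemma reciprocal_integral_eq:
  "reciprocal_integral {a..y} = (\<integral>\<^sup>+ t\<in>{a..y}. ennreal (t powr \<alpha> / \<sigma> t / t) \<partial>lborel)"
  unfolding reciprocal_integral_def
  using a_nonneg by (intro nn_integral_cong) (auto simp: indicator_def weight_ext_eq)

lemma reciprocal_integral_mono: "A \<subseteq> B \<Longrightarrow> reciprocal_integral A \<le> reciprocal_integral B"
  unfolding reciprocal_integral_def by (intro nn_integral_mono) (auto simp: indicator_def)

lemma reciprocal_integral_split:
  assumes "a \<le> y" "y \<le> z"
  shows "reciprocal_integral {a..z} = reciprocal_integral {a..y} + reciprocal_integral {y<..z}"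
proof -
  define f where "f = (\<lambda>t. ennreal (t powr \<alpha> / weight_ext t / t))"
  have [measurable]: "f \<in> borel_measurable borel" unfolding f_def by measurable
  have "reciprocal_integral {a..z} = (\<integral>\<^sup>+ t. f t * indicator {a..y} t + f t * indicator {y<..z} t \<partial>lborel)"
    unfolding reciprocal_integral_def f_def using assms by (intro nn_integral_cong) (auto simp: indicator_def)
  also have "\<dots> = reciprocal_integral {a..y} + reciprocal_integral {y<..z}"
    unfolding reciprocal_integral_def f_def by (rule nn_integral_add) measurable
  finally show ?thesis .
qed

lemma reciprocal_integral_block:
  assumes z: "z > 0" "z / 2 \<ge> a"
  shows "ennreal (2 powr (-1 - \<alpha>) * (z powr \<alpha> / \<sigma> z)) \<le> reciprocal_integral {z/2<..z}"
proof -
  define k where "k = (z / 2) powr \<alpha> / \<sigma> z / z"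
  have \<sigma>z: "\<sigma> z > 0" using weight_pos z by simp
  have "2 powr (-1 - \<alpha>) * (z powr \<alpha> / \<sigma> z) = k * (z - z / 2)"
    unfolding k_def using z \<sigma>z by (simp add: powr_divide powr_diff powr_minus_divide field_simps)
  moreover have "k \<ge> 0" unfolding k_def using z \<sigma>z by simp
  ultimately have "ennreal (2 powr (-1 - \<alpha>) * (z powr \<alpha> / \<sigma> z)) = ennreal k * ennreal (z - z / 2)"
    using z by (simp only: ennreal_mult)
  also have "\<dots> = (\<integral>\<^sup>+ t. ennreal k * indicator {z/2<..z} t \<partial>lborel)"
    using z by (simp add: nn_integral_cmult_indicator)
  also have "\<dots> \<le> reciprocal_integral {z/2<..z}" unfolding reciprocal_integral_def
  proof (rule nn_integral_mono)
    fix t :: real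
    show "ennreal k * indicator {z/2<..z} t \<le> ennreal (t powr \<alpha> / weight_ext t / t) * indicator {z/2<..z} t"
    proof (cases "t \<in> {z/2<..z}")
      case True
      hence t: "z / 2 < t" "t \<le> z" "t > 0" "t \<ge> a" using z by auto
      have \<sigma>t: "\<sigma> t > 0" using weight_pos t by simp
      have "(z / 2) powr \<alpha> / \<sigma> z \<le> t powr \<alpha> / \<sigma> t"
        using t z alpha_pos \<sigma>t by (intro frac_le powr_mono2 weight_mono) auto
      hence "k \<le> t powr \<alpha> / \<sigma> t / z" unfolding k_def using z by (intro divide_right_mono) auto
      also have "\<dots> \<le> t powr \<alpha> / \<sigma> t / t" using t \<sigma>t by (intro divide_left_mono) auto
      finally show ?thesis using True t by (simp add: ennreal_leI weight_ext_eq)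
    qed simp
  qed
  finally show ?thesis .
qed

lemma reciprocal_integral_imp_eventual_dilation_bound:
  assumes "\<exists>C>0. \<forall>y\<ge>a. (\<integral>\<^sup>+ t\<in>{a..y}. ennreal (t powr \<alpha> / \<sigma> t / t) \<partial>lborel)
                       \<le> ennreal (C * y powr \<alpha> / \<sigma> y)"
  shows eventual_dilation_bound
proof -
  obtain C where C: "C > 0" and HC: "\<And>y. y \<ge> a \<Longrightarrow> reciprocal_integral {a..y} \<le> ennreal (C * y powr \<alpha> / \<sigma> y)"
    using assms unfolding reciprocal_integral_eq by blast
  define F where "F = (\<lambda>y. enn2real (reciprocal_integral {a..y}))"
  define G where "G = (\<lambda>y. y powr \<alpha> / \<sigma> y)"
  define T where "T = max (2 * a) 1"
  have T: "T > 0" unfolding T_def by auto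
  have yT: "y > 0" "y / 2 \<ge> a" "y \<ge> a" "2 * y \<ge> T" if "y \<ge> T" for y
    using that a_nonneg unfolding T_def by auto
  have G: "G y > 0" if "y \<ge> a" "y > 0" for y unfolding G_def using that weight_pos by simp
  have finite: "reciprocal_integral {a..y} = ennreal (F y)" if "y \<ge> a" for y
    using HC[OF that] unfolding F_def by (metis ennreal_enn2real ennreal_less_top order_le_less_trans)
  have F_nonneg: "F y \<ge> 0" for y unfolding F_def by simp
  have "\<exists>n>0. \<exists>\<theta><1. \<forall>y\<in>{T..}. 1 / G (2 ^ n * y) \<le> \<theta> * (1 / G y)"
  proof (rule head_doubling_growth[where F = F and G = G and c = "2 powr (-1 - \<alpha>)" and C = C])
    fix y assume "y \<in> {T..}"
    hence y: "y \<ge> T" by simp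
    show "2 * y \<in> {T..}" using yT[OF y] by simp
    show "G y > 0" using G yT[OF y] by simp
    have "ennreal (F y) \<le> ennreal (C * G y)" using HC[of y] finite[of y] yT[OF y] unfolding G_def by simp
    moreover have "0 \<le> C * G y" using C G[of y] yT[OF y] by simp
    ultimately show "F y \<le> C * G y" by (simp add: ennreal_le_iff)
    have "{y/2<..y} \<subseteq> {a..y}" using yT[OF y] by auto
    hence "ennreal (2 powr (-1 - \<alpha>) * G y) \<le> reciprocal_integral {a..y}"
      using order.trans[OF reciprocal_integral_block[of y] reciprocal_integral_mono] yT[OF y]
      unfolding G_def by simp
    thus "2 powr (-1 - \<alpha>) * G y \<le> F y" using finite[of y] yT[OF y] F_nonneg by (simp add: ennreal_le_iff)
    have "ennreal (F y) + ennreal (2 powr (-1 - \<alpha>) * G (2 * y)) \<le> ennreal (F (2 * y))"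
      using reciprocal_integral_split[of y "2 * y"] reciprocal_integral_block[of "2 * y"]
        finite[of y] finite[of "2 * y"] yT[OF y] unfolding G_def by (simp add: add_left_mono)
    thus "F y + 2 powr (-1 - \<alpha>) * G (2 * y) \<le> F (2 * y)"
      using F_nonneg[of y] F_nonneg[of "2 * y"] G[of "2 * y"] yT[OF y]
      by (simp add: ennreal_plus[symmetric] ennreal_le_iff del: ennreal_plus)
  qed (use C in auto)
  thus ?thesis unfolding G_def by (intro eventual_dilation_boundI[OF T]) simp
qed

lemma reciprocal_integral_iff_upper_type:
  "(\<exists>C>0. \<forall>y\<ge>a. (\<integral>\<^sup>+ t\<in>{a..y}. ennreal (t powr \<alpha> / \<sigma> t / t) \<partial>lborel)
                       \<le> ennreal (C * y powr \<alpha> / \<sigma> y)) \<longleftrightarrow> upper_type_below_alpha"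
  using reciprocal_integral_imp_eventual_dilation_bound eventual_dilation_bound_imp_upper_type
    upper_type_imp_reciprocal_integral by blast

lemma reciprocal_sum_le_upper_type:
  assumes H: "upper_type \<gamma> M" and \<gamma>: "\<alpha> - 1 \<le> \<gamma>" "\<gamma> < \<alpha>" and p: "p \<ge> nat \<lceil>a\<rceil> + 1"
  shows "(\<Sum>k = nat \<lceil>a\<rceil> + 1..p. real k powr (\<alpha> - 1) / \<sigma> (real k)) \<le> M / (\<alpha> - \<gamma>) * real p powr \<alpha> / \<sigma> (real p)"
proof -
  define \<beta> where "\<beta> = \<alpha> - \<gamma>"
  have \<beta>: "\<beta> > 0" "\<beta> \<le> 1" unfolding \<beta>_def using \<gamma> by auto
  have M: "M > 0" using H unfolding upper_type_def by simp
  have pa: "real p \<ge> a" "p \<ge> 1" using p by linarith+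
  have \<sigma>p: "\<sigma> (real p) > 0" using weight_pos pa by simp
  define c where "c = M * real p powr \<gamma> / \<sigma> (real p)"
  have c: "c \<ge> 0" unfolding c_def using M \<sigma>p by simp
  have "(\<Sum>k = nat \<lceil>a\<rceil> + 1..p. real k powr (\<alpha> - 1) / \<sigma> (real k))
      \<le> (\<Sum>k = nat \<lceil>a\<rceil> + 1..p. c * real k powr (\<beta> - 1))"
  proof (rule sum_mono)
    fix k assume "k \<in> {nat \<lceil>a\<rceil> + 1..p}"
    hence k: "real k \<ge> a" "k \<le> p" "real k > 0" by (auto, linarith)
    have \<sigma>k: "\<sigma> (real k) > 0" using weight_pos k by simp
    have "\<sigma> (real p) \<le> M * (real p / real k) powr \<gamma> * \<sigma> (real k)"
      using upper_typeD[OF H k(1,3)] k by simp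
    hence "1 / \<sigma> (real k) \<le> M * (real p / real k) powr \<gamma> / \<sigma> (real p)"
      using \<sigma>k \<sigma>p by (simp add: field_simps)
    hence "real k powr (\<alpha> - 1) * (1 / \<sigma> (real k))
        \<le> real k powr (\<alpha> - 1) * (M * (real p / real k) powr \<gamma> / \<sigma> (real p))"
      by (intro mult_left_mono) auto
    also have "\<dots> = c * real k powr (\<beta> - 1)"
    proof -
      have "(real p / real k) powr \<gamma> = real p powr \<gamma> / real k powr \<gamma>" using k by (simp add: powr_divide)
      moreover have "real k powr (\<beta> - 1) = real k powr (\<alpha> - 1) / real k powr \<gamma>"
        unfolding \<beta>_def by (simp add: powr_diff[symmetric] algebra_simps)
      ultimately show ?thesis unfolding c_def by (simp add: field_simps)
    qed
    finally show "real k powr (\<alpha> - 1) / \<sigma> (real k) \<le> c * real k powr (\<beta> - 1)" by simp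
  qed
  also have "\<dots> \<le> c * (\<Sum>k = 1..p. real k powr (\<beta> - 1))"
    unfolding sum_distrib_left[symmetric] using c by (intro mult_left_mono sum_mono2) auto
  also have "\<dots> \<le> c * (real p powr \<beta> / \<beta>)" using sum_powr_le[OF \<beta> pa(2)] c by (intro mult_left_mono)
  also have "\<dots> = M / \<beta> * real p powr \<alpha> / \<sigma> (real p)"
    unfolding c_def \<beta>_def using \<beta> \<sigma>p by (simp add: powr_add[symmetric] field_simps)
  finally show ?thesis by (simp add: \<beta>_def)
qed

lemma upper_type_imp_reciprocal_sum:
  assumes upper_type_below_alpha
  shows "\<exists>C>0. \<forall>p::nat. p \<ge> nat \<lceil>a\<rceil> + 1 \<longrightarrow>
    (\<Sum>k = nat \<lceil>a\<rceil> + 1..p. real k powr (\<alpha> - 1) / \<sigma> (real k)) \<le> C * real p powr \<alpha> / \<sigma> (real p)"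
proof -
  obtain \<gamma>0 M where \<gamma>0: "\<gamma>0 < \<alpha>" and H0: "upper_type \<gamma>0 M"
    using assms unfolding upper_type_below_alpha_def by blast
  define \<gamma> where "\<gamma> = max \<gamma>0 (\<alpha> - 1/2)"
  have \<gamma>: "\<alpha> - 1 \<le> \<gamma>" "\<gamma> < \<alpha>" unfolding \<gamma>_def using \<gamma>0 by auto
  have H: "upper_type \<gamma> M" using upper_type_mono_exponent[OF H0] unfolding \<gamma>_def by simp
  moreover have "M / (\<alpha> - \<gamma>) > 0" using H \<gamma> unfolding upper_type_def by simp
  ultimately show ?thesis using reciprocal_sum_le_upper_type[OF _ \<gamma>] by blast
qed

lemma reciprocal_sum_block:
  assumes h: "nat \<lceil>a\<rceil> \<le> h" "2 * h \<le> p" "p \<le> 2 * h + 2" "p \<ge> 1"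
  shows "2 powr (-1 - \<alpha>) * (real p powr \<alpha> / \<sigma> (real p))
    \<le> (\<Sum>k = h+1..p. real k powr (\<alpha> - 1) / \<sigma> (real k))"
proof -
  have ka: "real k \<ge> a" "real k > 0" if "k \<ge> h + 1" for k using that h(1) by linarith+
  have pa: "real p \<ge> a" "real p > 0" using ka[of p] h by auto
  have \<sigma>p: "\<sigma> (real p) > 0" using weight_pos pa by simp
  define L where "L = (real p / 2) powr \<alpha> / (real p * \<sigma> (real p))"
  have L: "L \<ge> 0" unfolding L_def using \<sigma>p pa by simp
  have "L \<le> real k powr (\<alpha> - 1) / \<sigma> (real k)" if k: "k \<in> {h+1..p}" for k
  proof -
    have kn: "real k \<ge> a" "real k > 0" using k ka by auto
    have \<sigma>k: "\<sigma> (real k) > 0" using weight_pos kn by simp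
    have "(real p / 2) powr \<alpha> \<le> real k powr \<alpha>" using k h alpha_pos by (intro powr_mono2) auto
    moreover have "real k * \<sigma> (real k) \<le> real p * \<sigma> (real p)"
      using k kn \<sigma>k by (intro mult_mono weight_mono) auto
    ultimately have "L \<le> real k powr \<alpha> / (real k * \<sigma> (real k))"
      unfolding L_def using kn \<sigma>k by (intro frac_le) auto
    also have "\<dots> = real k powr (\<alpha> - 1) / \<sigma> (real k)" using kn by (simp add: powr_diff)
    finally show ?thesis .
  qed
  hence "real (p - h) * L \<le> (\<Sum>k = h+1..p. real k powr (\<alpha> - 1) / \<sigma> (real k))"
    using sum_mono[of "{h+1..p}" "\<lambda>_. L"] by simp
  moreover have "real p / 2 * L \<le> real (p - h) * L" using h L by (intro mult_right_mono) (auto simp: of_nat_diff)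
  moreover have "2 powr (-1 - \<alpha>) * (real p powr \<alpha> / \<sigma> (real p)) = real p / 2 * L"
    unfolding L_def using pa \<sigma>p by (simp add: powr_divide powr_diff powr_minus_divide field_simps)
  ultimately show ?thesis by linarith
qed

lemma reciprocal_sum_imp_integer_dilation_bound:
  assumes "\<exists>C>0. \<forall>p::nat. p \<ge> nat \<lceil>a\<rceil> + 1 \<longrightarrow>
    (\<Sum>k = nat \<lceil>a\<rceil> + 1..p. real k powr (\<alpha> - 1) / \<sigma> (real k)) \<le> C * real p powr \<alpha> / \<sigma> (real p)"
  shows integer_dilation_bound
proof -
  define n0 where "n0 = nat \<lceil>a\<rceil> + 1"
  define f where "f = (\<lambda>k::nat. real k powr (\<alpha> - 1) / \<sigma> (real k))"
  define S where "S = (\<lambda>p. \<Sum>k = n0..p. f k)"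
  define G where "G = (\<lambda>p::nat. real p powr \<alpha> / \<sigma> (real p))"
  obtain C where C: "C > 0" and S_upper: "\<And>p. p \<ge> n0 \<Longrightarrow> S p \<le> C * G p"
    using assms unfolding n0_def S_def G_def f_def by fastforce
  have n0: "real k \<ge> a" "k \<ge> 1" if "k \<ge> n0" for k using that unfolding n0_def by linarith+
  have S_nonneg: "S p \<ge> 0" for p
    unfolding S_def f_def using weight_pos n0 by (intro sum_nonneg) (simp add: less_imp_le)
  have split: "S p = S h + (\<Sum>k = h+1..p. f k)" if "n0 \<le> h + 1" "h \<le> p" for h p
    using sum.ub_add_nat[of n0 h f "p - h"] that unfolding S_def by simp
  note block = reciprocal_sum_block[folded f_def G_def]
  define P where "P = 2 * n0"
  have pP: "p \<ge> n0" "nat \<lceil>a\<rceil> \<le> p div 2" if "p \<ge> P" for p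
  proof -
    show "p \<ge> n0" using that unfolding P_def by simp
    have "(2 * nat \<lceil>a\<rceil>) div 2 \<le> p div 2" using that unfolding P_def n0_def by (intro div_le_mono) simp
    thus "nat \<lceil>a\<rceil> \<le> p div 2" by simp
  qed
  have "\<exists>n>0. \<exists>\<theta><1. \<forall>p\<in>{P..}. 1 / G (2 ^ n * p) \<le> \<theta> * (1 / G p)"
  proof (rule head_doubling_growth[where F = S and G = G and c = "2 powr (-1 - \<alpha>)" and C = C])
    fix p assume "p \<in> {P..}"
    hence p: "p \<ge> P" by simp
    show "2 * p \<in> {P..}" using p by simp
    show "G p > 0" unfolding G_def using weight_pos n0[OF pP(1)[OF p]] by simp
    show "S p \<le> C * G p" using S_upper pP[OF p] by simp
    have "p \<le> 2 * (p div 2) + 2" by presburger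
    hence "2 powr (-1 - \<alpha>) * G p \<le> (\<Sum>k = p div 2 + 1..p. f k)"
      using block[of "p div 2" p] pP[OF p] n0(2)[OF pP(1)[OF p]] unfolding G_def by simp
    also have "\<dots> \<le> S p" using split[of "p div 2" p] pP[OF p] S_nonneg[of "p div 2"] by (simp add: n0_def)
    finally show "2 powr (-1 - \<alpha>) * G p \<le> S p" .
    show "S p + 2 powr (-1 - \<alpha>) * G (2 * p) \<le> S (2 * p)"
      using block[of p "2 * p"] split[of p "2 * p"] pP[OF p] n0[OF pP(1)[OF p]] unfolding G_def
      by (simp add: n0_def)
  qed (use C in auto)
  moreover have "P > 0" unfolding P_def n0_def by simp
  ultimately show ?thesis unfolding G_def by (intro integer_dilation_boundI) simp_all
qed

lemma reciprocal_sum_iff_upper_type: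
  "(\<exists>C>0. \<forall>p::nat. p \<ge> nat \<lceil>a\<rceil> + 1 \<longrightarrow>
    (\<Sum>k = nat \<lceil>a\<rceil> + 1..p. real k powr (\<alpha> - 1) / \<sigma> (real k)) \<le> C * real p powr \<alpha> / \<sigma> (real p))
     \<longleftrightarrow> upper_type_below_alpha"
  using reciprocal_sum_imp_integer_dilation_bound integer_dilation_bound_imp_upper_type
    upper_type_imp_reciprocal_sum by blast

lemma tail_sum_le_upper_type:
  assumes H: "upper_type \<gamma> M" and \<gamma>: "\<gamma> < \<alpha>" and p: "p \<ge> 1" "p \<ge> nat \<lceil>a\<rceil>"
  shows "(\<Sum>j. ennreal (\<sigma> (real (p + j)) / real (p + j) powr (1 + \<alpha>)))
    \<le> ennreal (M * (1 + 1 / (\<alpha> - \<gamma>)) * \<sigma> (real p) / real p powr \<alpha>)"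
proof -
  define \<beta> where "\<beta> = \<alpha> - \<gamma>"
  have \<beta>: "\<beta> > 0" unfolding \<beta>_def using \<gamma> by simp
  have M: "M > 0" using H unfolding upper_type_def by simp
  have pa: "real p \<ge> a" "real p > 0" using p by linarith+
  have \<sigma>p: "\<sigma> (real p) > 0" using weight_pos pa by simp
  define A where "A = M * \<sigma> (real p) * real p powr (-\<gamma>)"
  have A: "A \<ge> 0" unfolding A_def using M \<sigma>p by simp
  have "ennreal (\<sigma> (real (p + j)) / real (p + j) powr (1 + \<alpha>))
      \<le> ennreal A * ennreal (real (p + j) powr (-1 - \<beta>))" for j
  proof -
    define x where "x = real (p + j)"
    have x: "x \<ge> real p" "x > 0" unfolding x_def using pa by auto
    have "\<sigma> x \<le> M * (x / real p) powr \<gamma> * \<sigma> (real p)" by (rule upper_typeD[OF H pa x(1)])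
    hence "\<sigma> x / x powr (1 + \<alpha>) \<le> M * (x / real p) powr \<gamma> * \<sigma> (real p) / x powr (1 + \<alpha>)"
      using x by (intro divide_right_mono) auto
    also have "\<dots> = A * x powr (-1 - \<beta>)"
    proof -
      have "(x / real p) powr \<gamma> = x powr \<gamma> * real p powr (-\<gamma>)"
        using x pa by (simp add: powr_divide powr_minus_divide)
      moreover have "x powr (-1 - \<beta>) = x powr \<gamma> / x powr (1 + \<alpha>)"
        unfolding \<beta>_def by (simp add: powr_diff[symmetric] algebra_simps)
      ultimately show ?thesis unfolding A_def by (simp add: field_simps)
    qed
    finally show ?thesis unfolding x_def using A
      by (simp add: ennreal_leI ennreal_mult[symmetric] del: ennreal_mult')
  qed
  hence "(\<Sum>j. ennreal (\<sigma> (real (p + j)) / real (p + j) powr (1 + \<alpha>)))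
      \<le> (\<Sum>j. ennreal A * ennreal (real (p + j) powr (-1 - \<beta>)))"
    by (intro suminf_le) auto
  also have "\<dots> = ennreal A * (\<Sum>j. ennreal (real (p + j) powr (-1 - \<beta>)))"
    by (rule ennreal_suminf_cmult)
  also have "\<dots> \<le> ennreal A * ennreal ((1 + 1 / \<beta>) * real p powr (-\<beta>))"
    using suminf_powr_tail_le[OF \<beta> p(1)] by (intro mult_left_mono) auto
  also have "\<dots> = ennreal (A * ((1 + 1 / \<beta>) * real p powr (-\<beta>)))"
    using A \<beta> by (simp add: ennreal_mult)
  also have "A * ((1 + 1 / \<beta>) * real p powr (-\<beta>)) = M * (1 + 1 / \<beta>) * \<sigma> (real p) / real p powr \<alpha>"
  proof -
    have "real p powr (-\<gamma>) * real p powr (-\<beta>) = real p powr (-\<gamma> + -\<beta>)"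
      by (rule powr_add[symmetric])
    also have "-\<gamma> + -\<beta> = -\<alpha>" unfolding \<beta>_def by simp
    finally have "real p powr (-\<gamma>) * real p powr (-\<beta>) = 1 / real p powr \<alpha>"
      by (simp add: powr_minus_divide)
    thus ?thesis unfolding A_def using \<beta> pa by (simp add: field_simps)
  qed
  finally show ?thesis by (simp add: \<beta>_def)
qed

lemma upper_type_imp_tail_sum:
  assumes upper_type_below_alpha
  shows "\<exists>C>0. \<forall>p::nat. p \<ge> 1 \<and> p \<ge> nat \<lceil>a\<rceil> \<longrightarrow>
    (\<Sum>j. ennreal (\<sigma> (real (p + j)) / real (p + j) powr (1 + \<alpha>))) \<le> ennreal (C * \<sigma> (real p) / real p powr \<alpha>)"
proof -
  obtain \<gamma> M where \<gamma>: "\<gamma> < \<alpha>" and H: "upper_type \<gamma> M"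
    using assms unfolding upper_type_below_alpha_def by blast
  moreover have "M * (1 + 1 / (\<alpha> - \<gamma>)) > 0" using H \<gamma> unfolding upper_type_def by (simp add: add_pos_pos)
  ultimately show ?thesis using tail_sum_le_upper_type by blast
qed

lemma tail_sum_block:
  assumes p: "p \<ge> 1"
  shows "2 powr (-1 - \<alpha>) * (\<sigma> (real p) / real p powr \<alpha>)
    \<le> (\<Sum>j<p. \<sigma> (real (p + j)) / real (p + j) powr (1 + \<alpha>))"
proof -
  define L where "L = \<sigma> (real p) / (2 * real p) powr (1 + \<alpha>)"
  have "L \<le> \<sigma> (real (p + j)) / real (p + j) powr (1 + \<alpha>)" if "j < p" for j
    unfolding L_def using that p weight_nonneg[of "real p"] weight_nonneg[of "real p + real j"] alpha_pos
    by (intro frac_le weight_mono powr_mono2) auto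
  hence "real p * L \<le> (\<Sum>j<p. \<sigma> (real (p + j)) / real (p + j) powr (1 + \<alpha>))"
    using sum_mono[of "{..<p}" "\<lambda>_. L"] by simp
  moreover have "real p * L = 2 powr (-1 - \<alpha>) * (\<sigma> (real p) / real p powr \<alpha>)"
    unfolding L_def using p by (simp add: powr_mult powr_add powr_minus_one_minus field_simps)
  ultimately show ?thesis by simp
qed

lemma tail_sum_imp_integer_dilation_bound:
  assumes "\<exists>C>0. \<forall>p::nat. p \<ge> 1 \<and> p \<ge> nat \<lceil>a\<rceil> \<longrightarrow>
    (\<Sum>j. ennreal (\<sigma> (real (p + j)) / real (p + j) powr (1 + \<alpha>))) \<le> ennreal (C * \<sigma> (real p) / real p powr \<alpha>)"
  shows integer_dilation_bound
proof -
  define P where "P = max 1 (nat \<lceil>a\<rceil>)"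
  define g where "g = (\<lambda>m::nat. \<sigma> (real m) / real m powr (1 + \<alpha>))"
  define H where "H = (\<lambda>p::nat. \<sigma> (real p) / real p powr \<alpha>)"
  obtain C where C: "C > 0" and HC: "\<And>p. p \<ge> P \<Longrightarrow> (\<Sum>j. ennreal (g (p + j))) \<le> ennreal (C * H p)"
    using assms unfolding P_def g_def H_def by auto
  have g: "g m \<ge> 0" for m unfolding g_def using weight_nonneg by simp
  have H: "H p \<ge> 0" for p unfolding H_def using weight_nonneg by simp
  have summable: "summable (\<lambda>j. g (p + j))" if "p \<ge> P" for p
    using HC[OF that] g by (intro summable_suminf_not_top) (auto simp: top_unique)
  define Tl where "Tl = (\<lambda>p. \<Sum>j. g (p + j))"
  have Tl_nonneg: "Tl p \<ge> 0" if "p \<ge> P" for p unfolding Tl_def using summable[OF that] g by (simp add: suminf_nonneg)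
  have Tl_upper: "Tl p \<le> C * H p" if "p \<ge> P" for p
    using HC[OF that] suminf_ennreal2[OF g summable[OF that]] C H[of p] unfolding Tl_def
    by (simp add: ennreal_le_iff)
  have Tl_split: "Tl p = Tl (2 * p) + (\<Sum>j<p. g (p + j))" if "p \<ge> P" for p
  proof -
    have "Tl p = (\<Sum>n. g (p + (n + p))) + (\<Sum>j<p. g (p + j))"
      using suminf_split_initial_segment[OF summable[OF that], of p] unfolding Tl_def by simp
    moreover have "p + (n + p) = 2 * p + n" for n by simp
    ultimately show ?thesis unfolding Tl_def by simp
  qed
  have block: "2 powr (-1 - \<alpha>) * H p \<le> (\<Sum>j<p. g (p + j))" if "p \<ge> P" for p
    using tail_sum_block[of p] that unfolding P_def g_def H_def by simp
  have "\<exists>n>0. \<exists>\<theta><1. \<forall>p\<in>{P..}. H (2 ^ n * p) \<le> \<theta> * H p"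
  proof (rule tail_doubling_contraction[where \<phi> = Tl and B = "max C (2 powr (1 + \<alpha>))" and c = "2 powr (-1 - \<alpha>)"])
    fix p assume "p \<in> {P..}"
    hence p: "p \<ge> P" by simp
    show "2 * p \<in> {P..}" using p by simp
    show "0 \<le> Tl p" by (rule Tl_nonneg[OF p])
    show "Tl (2 * p) + 2 powr (-1 - \<alpha>) * H p \<le> Tl p" using Tl_split[OF p] block[OF p] by simp
    have "2 powr (-1 - \<alpha>) * H p \<le> Tl p" using Tl_split[OF p] block[OF p] Tl_nonneg[of "2 * p"] p by simp
    hence "H p \<le> 2 powr (1 + \<alpha>) * Tl p" by (simp add: powr_minus_one_minus field_simps)
    also have "\<dots> \<le> max C (2 powr (1 + \<alpha>)) * Tl p" using Tl_nonneg[OF p] by (intro mult_right_mono) auto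
    finally show "H p \<le> max C (2 powr (1 + \<alpha>)) * Tl p" .
    have "Tl p \<le> C * H p" by (rule Tl_upper[OF p])
    also have "\<dots> \<le> max C (2 powr (1 + \<alpha>)) * H p" using H by (intro mult_right_mono) auto
    finally show "Tl p \<le> max C (2 powr (1 + \<alpha>)) * H p" .
  qed (use C in auto)
  moreover have "P > 0" unfolding P_def by simp
  ultimately show ?thesis unfolding H_def by (intro integer_dilation_boundI) simp_all
qed

lemma tail_sum_iff_upper_type:
  "(\<exists>C>0. \<forall>p::nat. p \<ge> 1 \<and> p \<ge> nat \<lceil>a\<rceil> \<longrightarrow>
    (\<Sum>j. ennreal (\<sigma> (real (p + j)) / real (p + j) powr (1 + \<alpha>))) \<le> ennreal (C * \<sigma> (real p) / real p powr \<alpha>))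
     \<longleftrightarrow> upper_type_below_alpha"
  using tail_sum_imp_integer_dilation_bound integer_dilation_bound_imp_upper_type
    upper_type_imp_tail_sum by blast

end

theorem theorem2p11:
  fixes \<sigma> :: "real \<Rightarrow> real" and \<alpha> a :: real
  assumes nonneg: "\<forall>t\<ge>0. \<sigma> t \<ge> 0"
    and mono: "mono_on {0..} \<sigma>"
    and lim: "filterlim \<sigma> at_top at_top"
    and alpha_pos: "\<alpha> > 0"
    and a_nonneg: "a \<ge> 0"
    and pos: "\<forall>x\<ge>a. \<sigma> x > 0"
  shows
   "(integral_condition \<sigma> \<alpha> \<longleftrightarrow>
      (\<exists>\<kappa> :: real \<Rightarrow> real. mono_on {0..} \<kappa> \<and> (\<forall>t\<ge>0. \<kappa> t \<ge> 0) \<and>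
         sim_on {0..} \<sigma> \<kappa> \<and> \<kappa> 0 = \<sigma> 0 / \<alpha>\<^sup>2 \<and> integral_condition \<kappa> \<alpha> \<and>
         concave_on {0..} (\<lambda>t. \<kappa> (t powr (1 / \<alpha>))))) \<and>
    (integral_condition \<sigma> \<alpha> \<longleftrightarrow>
      ((\<lambda>\<epsilon>. Limsup at_top (\<lambda>t. ereal (\<epsilon> powr \<alpha> * \<sigma> t / \<sigma> (\<epsilon> * t))))
         \<longlongrightarrow> 0) (at_right 0)) \<and>
    (integral_condition \<sigma> \<alpha> \<longleftrightarrow>
      (\<exists>K>1. Limsup at_top (\<lambda>t. ereal (\<sigma> (K * t) / \<sigma> t)) < ereal (K powr \<alpha>))) \<and>
    (integral_condition \<sigma> \<alpha> \<longleftrightarrow> gamma_index \<sigma> > ereal (1 / \<alpha>)) \<and>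
    (integral_condition \<sigma> \<alpha> \<longleftrightarrow> upper_matuszewska \<sigma> < ereal \<alpha>) \<and>
    (integral_condition \<sigma> \<alpha> \<longleftrightarrow>
      (\<exists>\<gamma>. 0 < \<gamma> \<and> \<gamma> < \<alpha> \<and>
         (a > 0 \<longrightarrow> almost_decreasing_from a (\<lambda>t. \<sigma> t / t powr \<gamma>)) \<and>
         (a = 0 \<longrightarrow> (\<forall>\<epsilon>>0. almost_decreasing_from \<epsilon> (\<lambda>t. \<sigma> t / t powr \<gamma>))))) \<and>
    (integral_condition \<sigma> \<alpha> \<longleftrightarrow>
      (\<exists>C>0. \<forall>y\<ge>a. (\<integral>\<^sup>+ t\<in>{a..y}. ennreal (t powr \<alpha> / \<sigma> t / t) \<partial>lborel)
                       \<le> ennreal (C * y powr \<alpha> / \<sigma> y))) \<and>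
    (integral_condition \<sigma> \<alpha> \<longleftrightarrow>
      (\<exists>C>0. \<forall>p::nat. p \<ge> nat \<lceil>a\<rceil> + 1 \<longrightarrow>
         (\<Sum>k = nat \<lceil>a\<rceil> + 1..p. real k powr (\<alpha> - 1) / \<sigma> (real k))
           \<le> C * real p powr \<alpha> / \<sigma> (real p))) \<and>
    (integral_condition \<sigma> \<alpha> \<longleftrightarrow>
      (\<forall>\<theta>. 0 < \<theta> \<and> \<theta> < 1 \<longrightarrow> (\<exists>k::nat. k \<ge> 2 \<and>
         (\<forall>p::nat. p \<ge> nat \<lceil>a\<rceil> + 1 \<longrightarrow>
            \<sigma> (real k * real p) \<le> \<theta> * real k powr \<alpha> * \<sigma> (real p))))) \<and>
    (integral_condition \<sigma> \<alpha> \<longleftrightarrow>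
      (\<exists>k::nat. k \<ge> 2 \<and>
         limsup (\<lambda>p::nat. ereal (\<sigma> (real k * real p) / \<sigma> (real p))) < ereal (real k powr \<alpha>))) \<and>
    (integral_condition \<sigma> \<alpha> \<longleftrightarrow>
      (\<exists>C>0. \<forall>p::nat. p \<ge> 1 \<and> p \<ge> nat \<lceil>a\<rceil> \<longrightarrow>
         (\<Sum>j. ennreal (\<sigma> (real (p + j)) / real (p + j) powr (1 + \<alpha>)))
           \<le> ennreal (C * \<sigma> (real p) / real p powr \<alpha>)))"
proof -
  interpret unbounded_weight \<sigma> \<alpha> a
    using nonneg mono lim alpha_pos a_nonneg pos by unfold_locales
  show ?thesis
    unfolding regularization_iff_integral_condition integral_condition_iff_upper_type
      small_scale_limit_iff_upper_type limsup_dilation_iff upper_type_iff_eventual_dilation_bound[symmetric]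
      gamma_index_iff_upper_type upper_matuszewska_iff_upper_type almost_decreasing_iff_upper_type
      reciprocal_integral_iff_upper_type reciprocal_sum_iff_upper_type
      uniform_integer_dilation_iff_upper_type limsup_integer_dilation_iff
      upper_type_iff_integer_dilation_bound[symmetric] tail_sum_iff_upper_type
    by simp
qed

end
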